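(* Let $E$ be a finite set, let $d\in\mathbb{N}$, and for each $\alpha\in\mathbb{Z}^E$ let $M_\alpha$ be a matroid on $E$ of rank $d$. The following are equivalent: (1) the map $M:\alpha\mapsto M_\alpha$ is a matroid flock (of rank $d$ on $E$); (2) there is a matroid valuation $\nu:\binom{E}{d}\to\mathbb{Z}\cup\{\infty\}$ such that $M_\alpha=M^\nu_\alpha$ for all $\alpha\in\mathbb{Z}^E$.
   Context: For $I\subseteq E$, $e_I:=\sum_{i\in I}e_i\in\mathbb{Z}^E$ (with $e_i$ the $i$-th unit vector) and $\mathbf{1}:=e_E$ is the all-one vector. For a matroid $N$ on $E$ and $i\in E$, $N\setminus i$ and $N/i$ denote deletion and contraction. A matroid flock of rank $d$ on $E$ is a map $M$ assigning to each $\alpha\in\mathbb{Z}^E$ a matroid $M_\alpha$ on $E$ of rank $d$ such that (MF1) $M_\alpha/i=M_{\alpha+e_i}\setminus i$ for all $\alpha\in\mathbb{Z}^E$, $i\in E$; and (MF2) $M_\alpha=M_{\alpha+\mathbf{1}}$ for all $\alpha\in\mathbb{Z}^E$. Write $\binom{E}{d}$ for the set of $d$-subsets of $E$. A matroid valuation is a function $\nu:\binom{E}{d}\to\mathbb{R}\cup\{\infty\}$ such that (V1) $\nu(B)<\infty$ for some $B$; and (V2) for all $B,B'\in\binom{E}{d}$ and $i\in B\setminus B'$ there is $j\in B'\setminus B$ with $\nu(B)+\nu(B')\ge \nu(B-i+j)+\nu(B'+i-j)$, where $B-i+j:=(B\cup\{j\})\setminus\{i\}$. For $\alpha\in\mathbb{R}^E$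 let $g^\nu(\alpha):=\sup\{e_{B'}^T\alpha-\nu(B'):B'\in\binom{E}{d}\}$, $\mathcal{B}^\nu_\alpha:=\{B\in\binom{E}{d}: e_B^T\alpha-\nu(B)=g^\nu(\alpha)\}$, and $M^\nu_\alpha:=(E,\mathcal{B}^\nu_\alpha)$ (the matroid with basis set $\mathcal{B}^\nu_\alpha$). *)

theory Defs
  imports "HOL-Library.Extended_Real"
begin

text \<open>A matroid on the ground set E is represented by its set of bases.\<close>
definition matroid_bases :: "'a set \<Rightarrow> 'a set set \<Rightarrow> bool" where
  "matroid_bases E Bs \<longleftrightarrow> Bs \<noteq> {} \<and> (\<forall>B\<in>Bs. B \<subseteq> E) \<and>
     (\<forall>B\<in>Bs. \<forall>B'\<in>Bs. \<forall>x\<in>B - B'. \<exists>y\<in>B' - B. insert y (B - {x}) \<in> Bs)"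

definition matroid_of_rank :: "'a set \<Rightarrow> nat \<Rightarrow> 'a set set \<Rightarrow> bool" where
  "matroid_of_rank E d Bs \<longleftrightarrow> matroid_bases E Bs \<and> (\<forall>B\<in>Bs. card B = d)"

definition mdelete :: "'a set set \<Rightarrow> 'a \<Rightarrow> 'a set set" where
  "mdelete Bs i = (if \<exists>B\<in>Bs. i \<notin> B then {B\<in>Bs. i \<notin> B} else (\<lambda>B. B - {i}) ` Bs)"

definition mcontract :: "'a set set \<Rightarrow> 'a \<Rightarrow> 'a set set" where
  "mcontract Bs i = (if \<exists>B\<in>Bs. i \<in> B then (\<lambda>B. B - {i}) ` {B\<in>Bs. i \<in> B} else Bs)"

text \<open>Integer vectors indexed by E (functions vanishing outside E).\<close>
definition zvec :: "'a set \<Rightarrow> ('a \<Rightarrow> int) set" where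
  "zvec E = {\<alpha>. \<forall>x. x \<notin> E \<longrightarrow> \<alpha> x = 0}"

definition unitvec :: "'a set \<Rightarrow> ('a \<Rightarrow> int)" where
  "unitvec I = (\<lambda>x. if x \<in> I then 1 else 0)"

definition matroid_flock :: "'a set \<Rightarrow> nat \<Rightarrow> (('a \<Rightarrow> int) \<Rightarrow> 'a set set) \<Rightarrow> bool" where
  "matroid_flock E d M \<longleftrightarrow>
     (\<forall>\<alpha>\<in>zvec E. matroid_of_rank E d (M \<alpha>)) \<and>
     (\<forall>\<alpha>\<in>zvec E. \<forall>i\<in>E. mcontract (M \<alpha>) i = mdelete (M (\<lambda>x. \<alpha> x + unitvec {i} x)) i) \<and>
     (\<forall>\<alpha>\<in>zvec E. M \<alpha> = M (\<lambda>x. \<alpha> x + unitvec E x))"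

definition dsubsets :: "'a set \<Rightarrow> nat \<Rightarrow> 'a set set" where
  "dsubsets E d = {B. B \<subseteq> E \<and> card B = d}"

definition matroid_valuation :: "'a set \<Rightarrow> nat \<Rightarrow> ('a set \<Rightarrow> ereal) \<Rightarrow> bool" where
  "matroid_valuation E d \<nu> \<longleftrightarrow>
     (\<forall>B\<in>dsubsets E d. \<nu> B \<noteq> -\<infinity>) \<and>
     (\<exists>B\<in>dsubsets E d. \<nu> B < \<infinity>) \<and>
     (\<forall>B\<in>dsubsets E d. \<forall>B'\<in>dsubsets E d. \<forall>i\<in>B - B'. \<exists>j\<in>B' - B.
        \<nu> B + \<nu> B' \<ge> \<nu> (insert j (B - {i})) + \<nu> (insert i B' - {j}))"

definition gval :: "'a set \<Rightarrow> nat \<Rightarrow> ('a set \<Rightarrow> ereal) \<Rightarrow> ('a \<Rightarrow> real) \<Rightarrow> ereal" where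
  "gval E d \<nu> \<alpha> = (SUP B'\<in>dsubsets E d. ereal (\<Sum>i\<in>B'. \<alpha> i) - \<nu> B')"

definition val_bases :: "'a set \<Rightarrow> nat \<Rightarrow> ('a set \<Rightarrow> ereal) \<Rightarrow> ('a \<Rightarrow> real) \<Rightarrow> 'a set set" where
  "val_bases E d \<nu> \<alpha> = {B\<in>dsubsets E d. ereal (\<Sum>i\<in>B. \<alpha> i) - \<nu> B = gval E d \<nu> \<alpha>}"

end

theory Submission
  imports Defs
begin

(* By (MF1), raising \<alpha> at i keeps exactly the bases of M\<^sub>\<alpha> through i when
   i is not a loop of M\<^sub>\<alpha>, and otherwise only adds bases through i. Hence the rank of {i} in
   M\<^sub>\<alpha> is a closed 1-form on the grid; integrating it gives a potential g with
   g(\<alpha> + e\<^sub>i) = g(\<alpha>) + rk\<^sub>\<alpha>{i}. The defect g(\<alpha>) - e\<^sub>B\<^sup>T\<alpha> is minimal exactly where B is a basis,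
   so \<nu>(B) := e\<^sub>B\<^sup>T\<beta> - g(\<beta>) for any \<beta> with B \<in> M\<^sub>\<beta> is well defined and M\<^sub>\<alpha> = M\<^sup>\<nu>\<^sub>\<alpha>.
   The exchange axiom (V2) is proved by induction on |B - B'|: suitable \<alpha> (huge weights on the
   common part, huge penalties outside B \<union> B', and a fine-tuned weighting of B \<triangle> B') make
   M\<^sub>\<alpha> consist of the optimal sets between B \<inter> B' and B \<union> B', and the basis exchange axioms of
   M\<^sub>\<alpha> then yield the required exchanges. M\<^sup>\<nu>\<^sub>\<alpha> is the set of maximisers of e\<^sub>B\<^sup>T\<alpha> - \<nu>(B); adding e\<^sub>i rewards the
   bases through i by one, which is (MF1), and adding 1 rewards every basis by d, which is (MF2). *)

section \<open>Integer vectors\<close>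

definition incr :: "('a \<Rightarrow> int) \<Rightarrow> 'a \<Rightarrow> 'a \<Rightarrow> int" where
  "incr \<alpha> i = \<alpha>(i := \<alpha> i + 1)"

definition decr :: "('a \<Rightarrow> int) \<Rightarrow> 'a \<Rightarrow> 'a \<Rightarrow> int" where
  "decr \<alpha> i = \<alpha>(i := \<alpha> i - 1)"

lemma incr_decr [simp]: "incr (decr \<alpha> i) i = \<alpha>"
  and decr_incr [simp]: "decr (incr \<alpha> i) i = \<alpha>"
  by (auto simp: incr_def decr_def)

lemma incr_same [simp]: "incr \<alpha> i i = \<alpha> i + 1"
  and incr_other [simp]: "j \<noteq> i \<Longrightarrow> incr \<alpha> i j = \<alpha> j"
  and decr_same [simp]: "decr \<alpha> i i = \<alpha> i - 1"
  and decr_other [simp]: "j \<noteq> i \<Longrightarrow> decr \<alpha> i j = \<alpha> j"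
  by (auto simp: incr_def decr_def)

lemma incr_commute: "incr (incr \<alpha> i) j = incr (incr \<alpha> j) i"
  and incr_decr_commute: "i \<noteq> j \<Longrightarrow> incr (decr \<alpha> j) i = decr (incr \<alpha> i) j"
  by (auto simp: incr_def decr_def)

lemma zvec_incr: "\<alpha> \<in> zvec E \<Longrightarrow> i \<in> E \<Longrightarrow> incr \<alpha> i \<in> zvec E"
  and zvec_decr: "\<alpha> \<in> zvec E \<Longrightarrow> i \<in> E \<Longrightarrow> decr \<alpha> i \<in> zvec E"
  by (auto simp: zvec_def incr_def decr_def)

lemma add_unitvec_singleton: "(\<lambda>x. \<alpha> x + unitvec {i} x) = incr \<alpha> i"
  by (auto simp: unitvec_def incr_def)

lemma sum_incr:
  assumes "finite B"
  shows "(\<Sum>x\<in>B. incr \<alpha> i x) = (\<Sum>x\<in>B. \<alpha> x) + of_bool (i \<in> B)"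
proof -
  have "(\<Sum>x\<in>B. incr \<alpha> i x) = (\<Sum>x\<in>B. \<alpha> x + of_bool (x = i))"
    by (rule sum.cong) (auto simp: incr_def)
  with assms show ?thesis
    by (simp add: sum.distrib)
qed

definition l1_norm :: "'a set \<Rightarrow> ('a \<Rightarrow> int) \<Rightarrow> int" where
  "l1_norm E \<alpha> = (\<Sum>x\<in>E. \<bar>\<alpha> x\<bar>)"

lemma l1_norm_nonneg: "0 \<le> l1_norm E \<alpha>"
  by (simp add: l1_norm_def sum_nonneg)

lemma l1_norm_update:
  assumes "finite E" "i \<in> E"
  shows "l1_norm E (\<alpha>(i := c)) = l1_norm E \<alpha> - \<bar>\<alpha> i\<bar> + \<bar>c\<bar>"
  using sum.remove[OF assms, of "\<lambda>x. \<bar>(\<alpha>(i := c)) x\<bar>"] sum.remove[OF assms, of "\<lambda>x. \<bar>\<alpha> x\<bar>"]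
  by (simp add: l1_norm_def)

lemma l1_norm_incr:
  assumes "finite E" "i \<in> E"
  shows "l1_norm E (incr \<alpha> i) = l1_norm E \<alpha> + (if 0 \<le> \<alpha> i then 1 else -1)"
  using l1_norm_update[OF assms, of \<alpha> "\<alpha> i + 1"] by (simp add: incr_def)

lemma l1_norm_decr:
  assumes "finite E" "i \<in> E"
  shows "l1_norm E (decr \<alpha> i) = l1_norm E \<alpha> + (if 0 < \<alpha> i then -1 else 1)"
  using l1_norm_update[OF assms, of \<alpha> "\<alpha> i - 1"] by (simp add: decr_def)

lemma l1_norm_diff_update:
  assumes "finite E" "x \<in> E"
  shows "l1_norm E (\<lambda>y. (\<alpha>(x := a)) y - (\<beta>(x := b)) y)
    = l1_norm E (\<lambda>y. \<alpha> y - \<beta> y) - \<bar>\<alpha> x - \<beta> x\<bar> + \<bar>a - b\<bar>"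
proof -
  have "(\<lambda>y. (\<alpha>(x := a)) y - (\<beta>(x := b)) y) = (\<lambda>y. \<alpha> y - \<beta> y)(x := a - b)"
    by auto
  then show ?thesis using l1_norm_update[OF assms] by simp
qed

section \<open>Integrating closed 1-forms on the grid\<close>

definition closed_form :: "'a set \<Rightarrow> (('a \<Rightarrow> int) \<Rightarrow> 'a \<Rightarrow> int) \<Rightarrow> bool" where
  "closed_form E r \<longleftrightarrow>
     (\<forall>\<alpha>\<in>zvec E. \<forall>i\<in>E. \<forall>j\<in>E. r \<alpha> i + r (incr \<alpha> i) j = r \<alpha> j + r (incr \<alpha> j) i)"

definition pivot :: "'a set \<Rightarrow> ('a \<Rightarrow> int) \<Rightarrow> 'a" where
  "pivot E \<alpha> = (SOME i. i \<in> E \<and> \<alpha> i \<noteq> 0)"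

lemma pivot_nonzero:
  assumes "i \<in> E" "\<alpha> i \<noteq> 0"
  shows "pivot E \<alpha> \<in> E" "\<alpha> (pivot E \<alpha>) \<noteq> 0"
  using someI[of "\<lambda>i. i \<in> E \<and> \<alpha> i \<noteq> 0", OF conjI[OF assms]] by (simp_all add: pivot_def)

lemma l1_norm_pivot_step:
  assumes "finite E" "\<exists>i\<in>E. \<alpha> i \<noteq> 0"
  shows "0 < \<alpha> (pivot E \<alpha>) \<Longrightarrow> nat (l1_norm E (decr \<alpha> (pivot E \<alpha>))) < nat (l1_norm E \<alpha>)"
    and "\<not> 0 < \<alpha> (pivot E \<alpha>) \<Longrightarrow> nat (l1_norm E (incr \<alpha> (pivot E \<alpha>))) < nat (l1_norm E \<alpha>)"
proof -
  have j: "pivot E \<alpha> \<in> E" "\<alpha> (pivot E \<alpha>) \<noteq> 0"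
    using assms(2) pivot_nonzero[of _ E \<alpha>] by blast+
  then show "0 < \<alpha> (pivot E \<alpha>) \<Longrightarrow> nat (l1_norm E (decr \<alpha> (pivot E \<alpha>))) < nat (l1_norm E \<alpha>)"
    and "\<not> 0 < \<alpha> (pivot E \<alpha>) \<Longrightarrow> nat (l1_norm E (incr \<alpha> (pivot E \<alpha>))) < nat (l1_norm E \<alpha>)"
    using l1_norm_decr[OF assms(1) j(1), of \<alpha>] l1_norm_incr[OF assms(1) j(1), of \<alpha>]
      l1_norm_nonneg[of E "decr \<alpha> (pivot E \<alpha>)"] l1_norm_nonneg[of E "incr \<alpha> (pivot E \<alpha>)"]
    by auto
qed

text \<open>Integrate r along the path from \<alpha> that keeps moving the pivot coordinate one step towards 0.\<close>

function potential :: "'a set \<Rightarrow> (('a \<Rightarrow> int) \<Rightarrow> 'a \<Rightarrow> int) \<Rightarrow> ('a \<Rightarrow> int) \<Rightarrow> int" where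
  "potential E r \<alpha> =
     (if finite E \<and> (\<exists>i\<in>E. \<alpha> i \<noteq> 0) then
        (let j = pivot E \<alpha> in
         if 0 < \<alpha> j then potential E r (decr \<alpha> j) + r (decr \<alpha> j) j
         else potential E r (incr \<alpha> j) - r \<alpha> j)
      else 0)"
  by pat_completeness auto

termination
proof (relation "measure (\<lambda>(E, r, \<alpha>). nat (l1_norm E \<alpha>))")
  show "wf (measure (\<lambda>(E, r, \<alpha>). nat (l1_norm E \<alpha>)))"
    by simp
qed (simp_all only: in_measure prod.case, metis l1_norm_pivot_step(1), metis l1_norm_pivot_step(2))

declare potential.simps [simp del]

definition lower_end :: "('a \<Rightarrow> int) \<Rightarrow> 'a \<Rightarrow> 'a \<Rightarrow> int" where
  "lower_end \<gamma> j = (if 0 < \<gamma> j then decr \<gamma> j else \<gamma>)"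

lemma lower_end_incr: "i \<noteq> j \<Longrightarrow> lower_end (incr \<alpha> i) j = incr (lower_end \<alpha> j) i"
  by (simp add: lower_end_def incr_decr_commute)

lemma zvec_lower_end: "\<gamma> \<in> zvec E \<Longrightarrow> j \<in> E \<Longrightarrow> lower_end \<gamma> j \<in> zvec E"
  by (simp add: lower_end_def zvec_decr)

lemma l1_norm_lower_end:
  assumes "finite E" "j \<in> E" "\<gamma> j \<noteq> 0"
  shows "l1_norm E (lower_end \<gamma> j) + l1_norm E (incr (lower_end \<gamma> j) j) = 2 * l1_norm E \<gamma> - 1"
  using l1_norm_decr[OF assms(1,2), of \<gamma>] l1_norm_incr[OF assms(1,2), of \<gamma>] assms(3)
  by (auto simp: lower_end_def)

lemma potential_pivot_edge:
  assumes "finite E" "\<exists>i\<in>E. \<gamma> i \<noteq> 0"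
  defines "c \<equiv> lower_end \<gamma> (pivot E \<gamma>)"
  shows "potential E r (incr c (pivot E \<gamma>)) = potential E r c + r c (pivot E \<gamma>)"
proof (cases "0 < \<gamma> (pivot E \<gamma>)")
  case True
  have "potential E r \<gamma> = potential E r (decr \<gamma> (pivot E \<gamma>)) + r (decr \<gamma> (pivot E \<gamma>)) (pivot E \<gamma>)"
    by (subst potential.simps) (use assms(1,2) True in \<open>simp add: Let_def\<close>)
  then show ?thesis using True by (simp add: c_def lower_end_def)
next
  case False
  have "potential E r (incr \<gamma> (pivot E \<gamma>)) = potential E r \<gamma> + r \<gamma> (pivot E \<gamma>)"
    by (subst (2) potential.simps) (use assms(1,2) False in \<open>simp add: Let_def\<close>)
  then show ?thesis using False by (simp add: c_def lower_end_def)
qed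

lemma closed_form_square:
  assumes "closed_form E r" "c \<in> zvec E" "i \<in> E" "j \<in> E"
    and "p (incr c j) = p c + r c j" "p (incr (incr c i) j) = p (incr c i) + r (incr c i) j"
  shows "p (incr c i) = p c + r c i \<longleftrightarrow> p (incr (incr c j) i) = p (incr c j) + r (incr c j) i"
proof -
  have "r c i + r (incr c i) j = r c j + r (incr c j) i"
    using assms(1-4) unfolding closed_form_def by blast
  then show ?thesis
    unfolding incr_commute[of c j i] using assms(5,6) by (intro iffI) linarith+
qed

lemma potential_incr:
  assumes E: "finite E" and r: "closed_form E r"
  shows "\<alpha> \<in> zvec E \<Longrightarrow> i \<in> E \<Longrightarrow> potential E r (incr \<alpha> i) = potential E r \<alpha> + r \<alpha> i"
proof (induction "nat (l1_norm E \<alpha> + l1_norm E (incr \<alpha> i))" arbitrary: \<alpha> i rule: less_induct)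
  case less
  let ?p = "potential E r" and ?N = "l1_norm E"
  have \<alpha>: "\<alpha> \<in> zvec E" and i: "i \<in> E" by fact+
  define \<beta> where "\<beta> = incr \<alpha> i"
  have \<beta>: "\<beta> \<in> zvec E" using zvec_incr[OF \<alpha> i] by (simp add: \<beta>_def)
  have IH: "?p (incr \<alpha>' i') = ?p \<alpha>' + r \<alpha>' i'"
    if "\<alpha>' \<in> zvec E" "i' \<in> E" "?N \<alpha>' + ?N (incr \<alpha>' i') < ?N \<alpha> + ?N \<beta>" for \<alpha>' i'
    using less.hyps[OF _ that(1,2)] that(3) l1_norm_nonneg[of E \<alpha>'] l1_norm_nonneg[of E "incr \<alpha>' i'"]
    by (simp add: nat_less_eq_zless \<beta>_def)
  text \<open>Let \<gamma> be the endpoint of the edge farther from the origin. Its pivot edge is known by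
    definition; every other edge of the unit square spanned by i and the pivot is shorter.\<close>
  define \<gamma> where "\<gamma> = (if 0 \<le> \<alpha> i then \<beta> else \<alpha>)"
  have N\<gamma>: "?N \<alpha> + ?N \<beta> = 2 * ?N \<gamma> - 1"
    using l1_norm_incr[OF E i, of \<alpha>] by (simp add: \<beta>_def \<gamma>_def)
  have "\<gamma> i \<noteq> 0" by (simp add: \<gamma>_def \<beta>_def)
  then have \<gamma>_ne: "\<exists>k\<in>E. \<gamma> k \<noteq> 0" using i by blast
  define j where "j = pivot E \<gamma>"
  have j: "j \<in> E" "\<gamma> j \<noteq> 0"
    using pivot_nonzero[of _ E \<gamma>] \<gamma>_ne unfolding j_def by blast+
  have pivot_edge: "?p (incr (lower_end \<gamma> j) j) = ?p (lower_end \<gamma> j) + r (lower_end \<gamma> j) j"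
    using potential_pivot_edge[OF E \<gamma>_ne] unfolding j_def .
  show ?case
  proof (cases "j = i")
    case True
    then show ?thesis
      using pivot_edge by (cases "0 \<le> \<alpha> i") (simp_all add: \<gamma>_def \<beta>_def lower_end_def)
  next
    case ji: False
    have j_edge: "?p (incr (lower_end \<delta> j) j) = ?p (lower_end \<delta> j) + r (lower_end \<delta> j) j"
      if \<delta>: "\<delta> = \<alpha> \<or> \<delta> = \<beta>" for \<delta>
    proof (cases "\<delta> = \<gamma>")
      case False
      have "\<delta> j \<noteq> 0" "?N \<delta> + 1 = ?N \<gamma>"
        using \<delta> False j(2) ji l1_norm_incr[OF E i, of \<alpha>] by (auto simp: \<gamma>_def \<beta>_def split: if_splits)
      moreover have "\<delta> \<in> zvec E" using \<delta> \<alpha> \<beta> by blast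
      ultimately show ?thesis
        using IH[OF zvec_lower_end[of \<delta> E j] j(1)] l1_norm_lower_end[OF E j(1), of \<delta>] N\<gamma> j(1) by simp
    qed (use pivot_edge in simp)
    define c where "c = lower_end \<alpha> j"
    have c: "c \<in> zvec E" and ci: "incr c i = lower_end \<beta> j"
      using zvec_lower_end[OF \<alpha> j(1)] lower_end_incr[OF ji[symmetric]] by (simp_all add: c_def \<beta>_def)
    define \<alpha>' where "\<alpha>' = (if 0 < \<alpha> j then c else incr c j)"
      \<comment> \<open>the end of the j-edge at \<alpha> other than \<alpha>\<close>
    have "\<alpha> j \<noteq> 0" "\<beta> j = \<alpha> j" using j(2) ji by (auto simp: \<gamma>_def \<beta>_def split: if_splits)
    then have "?N \<alpha>' = ?N \<alpha> - 1 \<and> ?N (incr \<alpha>' i) = ?N \<beta> - 1"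
    proof (cases "0 < \<alpha> j")
      case True
      then show ?thesis using l1_norm_decr[OF E j(1), of \<alpha>] l1_norm_decr[OF E j(1), of \<beta>] \<open>\<beta> j = \<alpha> j\<close>
        by (simp add: \<alpha>'_def c_def lower_end_def \<beta>_def incr_decr_commute[OF ji[symmetric]])
    next
      case False
      then show ?thesis using l1_norm_incr[OF E j(1), of \<alpha>] l1_norm_incr[OF E j(1), of \<beta>] \<open>\<beta> j = \<alpha> j\<close> \<open>\<alpha> j \<noteq> 0\<close>
        by (simp add: \<alpha>'_def c_def lower_end_def \<beta>_def incr_commute[of \<alpha> j i])
    qed
    moreover have "\<alpha>' \<in> zvec E" using c zvec_incr[OF c j(1)] by (simp add: \<alpha>'_def)
    ultimately have other: "?p (incr \<alpha>' i) = ?p \<alpha>' + r \<alpha>' i"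
      using IH[of \<alpha>' i] i by simp
    show ?thesis
      using closed_form_square[OF r c i j(1) j_edge[of \<alpha>, folded c_def] j_edge[of \<beta>, folded ci]] other
      by (cases "0 < \<alpha> j") (simp_all add: \<alpha>'_def c_def \<beta>_def lower_end_def)
  qed
qed

section \<open>Maximizers of integer functions\<close>

definition maximizers :: "'b set \<Rightarrow> ('b \<Rightarrow> 'c::linorder) \<Rightarrow> 'b set" where
  "maximizers F f = {x\<in>F. \<forall>y\<in>F. f y \<le> f x}"

lemma maximizers_nonempty:
  assumes "finite F" "F \<noteq> {}"
  shows "maximizers F f \<noteq> {}"
proof -
  have "Max (f ` F) \<in> f ` F" using assms by simp
  then obtain x where "x \<in> F" "f x = Max (f ` F)" by auto
  then have "x \<in> maximizers F f" using assms(1) by (simp add: maximizers_def)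
  then show ?thesis by blast
qed

lemma maximizers_cong: "(\<And>x. x \<in> F \<Longrightarrow> f x = g x) \<Longrightarrow> maximizers F f = maximizers F g"
  by (auto simp: maximizers_def)

lemma maximizers_add_const: "maximizers F (\<lambda>x. f x + c) = maximizers F (f :: 'b \<Rightarrow> int)"
  by (simp add: maximizers_def)

lemma maximizers_add_indicator_hit:
  fixes f :: "'b \<Rightarrow> int"
  assumes "B1 \<in> maximizers D f" "P B1"
  shows "maximizers D (\<lambda>B. f B + of_bool (P B)) = {B\<in>maximizers D f. P B}"
proof (intro set_eqI iffI)
  fix B assume "B \<in> maximizers D (\<lambda>B. f B + of_bool (P B))"
  then have "B \<in> D" "f B1 + 1 \<le> f B + of_bool (P B)" "f B \<le> f B1" "\<forall>B'\<in>D. f B' \<le> f B1"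
    using assms unfolding maximizers_def by auto
  then show "B \<in> {B\<in>maximizers D f. P B}"
    unfolding maximizers_def by (cases "P B") auto
next
  fix B assume "B \<in> {B\<in>maximizers D f. P B}"
  then show "B \<in> maximizers D (\<lambda>B. f B + of_bool (P B))"
    unfolding maximizers_def by (auto intro: add_mono)
qed

lemma maximizers_add_indicator_miss:
  fixes f :: "'b \<Rightarrow> int"
  assumes "maximizers D f \<noteq> {}" "\<forall>B\<in>maximizers D f. \<not> P B"
  shows "maximizers D f = {B\<in>maximizers D (\<lambda>B. f B + of_bool (P B)). \<not> P B}"
proof (intro set_eqI iffI)
  fix B assume B: "B \<in> maximizers D f"
  have "f B' + of_bool (P B') \<le> f B" if B': "B' \<in> D" for B'
  proof (cases "P B'")
    case True
    then have "B' \<notin> maximizers D f" using assms(2) by blast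
    then obtain y where "y \<in> D" "f B' < f y" using B' by (auto simp: maximizers_def not_le)
    then show ?thesis using B True by (force simp: maximizers_def)
  qed (use B B' in \<open>simp add: maximizers_def\<close>)
  then show "B \<in> {B\<in>maximizers D (\<lambda>B. f B + of_bool (P B)). \<not> P B}"
    using B assms(2) unfolding maximizers_def by auto
next
  fix B assume B: "B \<in> {B\<in>maximizers D (\<lambda>B. f B + of_bool (P B)). \<not> P B}"
  obtain B0 where "B0 \<in> maximizers D f" using assms(1) by blast
  then show "B \<in> maximizers D f"
    using B assms(2) unfolding maximizers_def by (force intro: order_trans)
qed

lemma maximizers_dominant_penalty:
  fixes g h :: "'b \<Rightarrow> int"
  assumes F: "F \<subseteq> D" "F \<noteq> {}" and g: "\<And>Z. Z \<in> D \<Longrightarrow> \<bar>g Z\<bar> \<le> K"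
    and h_in: "\<And>Z. Z \<in> F \<Longrightarrow> h Z = c" and h_out: "\<And>Z. Z \<in> D - F \<Longrightarrow> h Z \<le> c - L"
    and L: "2 * K < L"
  shows "maximizers D (\<lambda>Z. g Z + h Z) = maximizers F g"
proof -
  have beaten: "g Z + h Z < g Z' + h Z'" if "Z \<in> D - F" "Z' \<in> F" for Z Z'
    using g[of Z] g[of Z'] h_out[OF that(1)] h_in[OF that(2)] that F(1) L by fastforce
  show ?thesis
  proof (intro set_eqI iffI)
    fix Z assume Z: "Z \<in> maximizers D (\<lambda>Z. g Z + h Z)"
    obtain Z0 where "Z0 \<in> F" using F(2) by blast
    then have "Z \<in> F" using Z beaten[of Z Z0] F(1) by (force simp: maximizers_def)
    then show "Z \<in> maximizers F g" using Z h_in F(1) by (force simp: maximizers_def)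
  next
    fix Z assume Z: "Z \<in> maximizers F g"
    then have "g Z' + h Z' \<le> g Z + h Z" if "Z' \<in> D" for Z'
      using beaten[of Z' Z] h_in that by (cases "Z' \<in> F") (auto simp: maximizers_def)
    then show "Z \<in> maximizers D (\<lambda>Z. g Z + h Z)" using Z F(1) by (auto simp: maximizers_def)
  qed
qed

lemma sum_of_bool_mult:
  "finite Z \<Longrightarrow> (\<Sum>x\<in>Z. L * of_bool (x \<in> A)) = (L::int) * int (card (Z \<inter> A))"
  by (simp add: sum_distrib_left[symmetric] sum.inter_filter[symmetric] Int_def)

lemma sum_bonus_penalty:
  fixes L :: int and S :: "'a set"
  assumes Z: "finite Z" "Z \<subseteq> E" and C: "finite C" and L: "0 \<le> L"
  defines "h \<equiv> \<lambda>x. L * of_bool (x \<in> C) - L * of_bool (x \<in> E - (C \<union> S))"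
  shows "C \<subseteq> Z \<Longrightarrow> Z \<subseteq> C \<union> S \<Longrightarrow> (\<Sum>x\<in>Z. h x) = L * card C"
    and "\<not> (C \<subseteq> Z \<and> Z \<subseteq> C \<union> S) \<Longrightarrow> (\<Sum>x\<in>Z. h x) \<le> L * card C - L"
proof -
  have h_sum: "(\<Sum>x\<in>Z. h x) = L * card (Z \<inter> C) - L * card (Z \<inter> (E - (C \<union> S)))"
    using Z(1) unfolding h_def sum_subtractf by (simp only: sum_of_bool_mult)
  show "C \<subseteq> Z \<Longrightarrow> Z \<subseteq> C \<union> S \<Longrightarrow> (\<Sum>x\<in>Z. h x) = L * card C"
  proof -
    assume "C \<subseteq> Z" "Z \<subseteq> C \<union> S"
    then have "Z \<inter> C = C" "Z \<inter> (E - (C \<union> S)) = {}" by auto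
    then show ?thesis using h_sum by simp
  qed
  assume out: "\<not> (C \<subseteq> Z \<and> Z \<subseteq> C \<union> S)"
  have le: "L * card (Z \<inter> C) \<le> L * card C" using C L by (simp add: card_mono mult_left_mono)
  consider "\<not> C \<subseteq> Z" | "Z \<inter> (E - (C \<union> S)) \<noteq> {}" using out Z(2) by auto
  then show "(\<Sum>x\<in>Z. h x) \<le> L * card C - L"
  proof cases
    case 1
    then have "card (Z \<inter> C) < card C" using C by (intro psubset_card_mono) auto
    then have "L * card (Z \<inter> C) \<le> L * (int (card C) - 1)" using L by (intro mult_left_mono) auto
    moreover have "0 \<le> L * card (Z \<inter> (E - (C \<union> S)))" using L by simp
    ultimately show ?thesis using h_sum by (simp add: algebra_simps)
  next
    case 2
    then have "1 \<le> card (Z \<inter> (E - (C \<union> S)))" using Z(1) by (simp add: Suc_le_eq card_gt_0_iff)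
    then have "L \<le> L * card (Z \<inter> (E - (C \<union> S)))" using L by (simp add: mult_le_cancel_left1)
    then show ?thesis using h_sum le by linarith
  qed
qed

text \<open>\<sigma> and \<delta> are the targets for sa + sb and sa - sb; \<delta> is adjusted by one to the parity
  of \<sigma> so that both can be halved.\<close>

lemma four_point_weights:
  fixes x y wab wuv wav wub :: int
  assumes ab_uv: "Pab \<Longrightarrow> Puv \<Longrightarrow> x + y < wab + wuv"
    and av_ub: "Pav \<Longrightarrow> Pub \<Longrightarrow> x + y < wav + wub"
  obtains sa su sb sv where "sa + su = x" "sb + sv = y"
    "Pab \<longrightarrow> sa + sb \<le> wab" "Puv \<longrightarrow> su + sv \<le> wuv"
    "Pav \<longrightarrow> sa + sv \<le> wav" "Pub \<longrightarrow> su + sb \<le> wub"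
proof -
  define \<sigma> where "\<sigma> = (if Puv then x + y - wuv else if Pab then wab - 1 else 0)"
  define \<delta>1 where "\<delta>1 = (if Pub then x - wub else if Pav then wav - y - 1 else 0)"
  define \<delta> where "\<delta> = \<delta>1 + (\<sigma> + \<delta>1) mod 2"
  define sa where "sa = (\<sigma> + \<delta>) div 2"
  define sb where "sb = (\<sigma> - \<delta>) div 2"
  have sums: "sa + sb = \<sigma>" "sa - sb = \<delta>" unfolding sa_def sb_def \<delta>_def by presburger+
  have "\<delta>1 \<le> \<delta>" "\<delta> \<le> \<delta>1 + 1" unfolding \<delta>_def by presburger+
  show thesis
  proof (rule that[of sa "x - sa" sb "y - sb"])
    show "Pab \<longrightarrow> sa + sb \<le> wab" using sums ab_uv unfolding \<sigma>_def by auto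
    show "Puv \<longrightarrow> x - sa + (y - sb) \<le> wuv" using sums unfolding \<sigma>_def by auto
    show "Pav \<longrightarrow> sa + (y - sb) \<le> wav"
      using sums av_ub \<open>\<delta> \<le> \<delta>1 + 1\<close> unfolding \<delta>1_def by (auto split: if_splits)
    show "Pub \<longrightarrow> x - sa + sb \<le> wub" using sums \<open>\<delta>1 \<le> \<delta>\<close> unfolding \<delta>1_def by auto
  qed simp_all
qed

lemma card_add_two_insert:
  assumes "finite Z" "C \<subseteq> Z" "card Z = card C + 2"
  obtains p q where "p \<noteq> q" "p \<notin> C" "q \<notin> C" "Z = insert p (insert q C)"
proof -
  have "card (Z - C) = 2" using assms card_Diff_subset[OF finite_subset[OF assms(2,1)] assms(2)] by simp
  then obtain p q where "Z - C = {p, q}" "p \<noteq> q" by (meson card_2_iff)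
  then show thesis using that assms(2) by blast
qed

lemma card_diff_sym: "finite X \<Longrightarrow> finite Y \<Longrightarrow> card X = card Y \<Longrightarrow> card (X - Y) = card (Y - X)"
  by (metis card_Diff_subset_Int finite_Int inf_commute)

section \<open>Matroids\<close>

lemma matroid_of_rank_basis:
  assumes "finite E" "matroid_of_rank E d Bs" "B \<in> Bs"
  shows "B \<subseteq> E" "finite B" "card B = d"
proof -
  show "B \<subseteq> E" "card B = d" using assms(2,3) unfolding matroid_of_rank_def matroid_bases_def by blast+
  then show "finite B" using assms(1) finite_subset by blast
qed

lemma matroid_of_rank_nonempty: "matroid_of_rank E d Bs \<Longrightarrow> Bs \<noteq> {}"
  by (simp add: matroid_of_rank_def matroid_bases_def)

lemma mcontract_eq_mdelete_nonloop:
  assumes E: "finite E" and N: "matroid_of_rank E d N" and N': "matroid_of_rank E d N'"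
    and B0: "B0 \<in> N" "i \<in> B0"
  shows "mcontract N i = mdelete N' i \<longleftrightarrow> N' = {B\<in>N. i \<in> B}"
proof
  have contract: "mcontract N i = (\<lambda>B. B - {i}) ` {B\<in>N. i \<in> B}"
    using B0 by (auto simp: mcontract_def)
  assume eq: "mcontract N i = mdelete N' i"
  have through_i: "i \<in> B" if "B \<in> N'" for B
  proof (rule ccontr)
    assume "i \<notin> B"
    then have "mdelete N' i = {B\<in>N'. i \<notin> B}" using that by (auto simp: mdelete_def)
    then have "B0 - {i} \<in> N'" using eq contract B0 by auto
    then show False
      using matroid_of_rank_basis[OF E N B0(1)] matroid_of_rank_basis[OF E N'] B0(2)
      by (metis card_Diff1_less nat_neq_iff)
  qed
  then have "(\<lambda>B. B - {i}) ` N' = (\<lambda>B. B - {i}) ` {B\<in>N. i \<in> B}"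
    using eq contract by (auto simp: mdelete_def)
  moreover have "inj_on (\<lambda>B. B - {i}) (N' \<union> {B\<in>N. i \<in> B})"
    using through_i by (intro inj_onI) (metis Un_iff insert_Diff mem_Collect_eq)
  ultimately show "N' = {B\<in>N. i \<in> B}"
    by (metis (no_types, lifting) inj_on_image_eq_iff sup.cobounded1 sup.cobounded2)
next
  assume "N' = {B\<in>N. i \<in> B}"
  then show "mcontract N i = mdelete N' i" using B0 by (auto simp: mcontract_def mdelete_def)
qed

lemma mcontract_eq_mdelete_loop:
  assumes E: "finite E" and N: "matroid_of_rank E d N" and N': "matroid_of_rank E d N'"
    and loop: "\<not> (\<exists>B\<in>N. i \<in> B)"
  shows "mcontract N i = mdelete N' i \<longleftrightarrow> N = {B\<in>N'. i \<notin> B}"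
proof
  have contract: "mcontract N i = N" using loop by (simp add: mcontract_def)
  assume eq: "mcontract N i = mdelete N' i"
  show "N = {B\<in>N'. i \<notin> B}"
  proof (cases "\<exists>B\<in>N'. i \<notin> B")
    case True
    then show ?thesis using eq contract by (simp add: mdelete_def)
  next
    case all_through_i: False
    obtain B0 where "B0 \<in> N" using matroid_of_rank_nonempty[OF N] by blast
    then obtain B where "B \<in> N'" "B0 = B - {i}"
      using eq contract all_through_i by (auto simp: mdelete_def)
    then show ?thesis
      using matroid_of_rank_basis[OF E N \<open>B0 \<in> N\<close>] matroid_of_rank_basis[OF E N'] all_through_i
      by (metis card_Diff1_less nat_neq_iff)
  qed
next
  assume N_eq: "N = {B\<in>N'. i \<notin> B}"
  moreover have "\<exists>B\<in>N'. i \<notin> B" using N_eq matroid_of_rank_nonempty[OF N] by blast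
  ultimately show "mcontract N i = mdelete N' i" using loop by (simp add: mcontract_def mdelete_def)
qed

lemma mcontract_eq_mdelete_iff:
  assumes "finite E" "matroid_of_rank E d N" "matroid_of_rank E d N'"
  shows "mcontract N i = mdelete N' i \<longleftrightarrow>
    (if \<exists>B\<in>N. i \<in> B then N' = {B\<in>N. i \<in> B} else N = {B\<in>N'. i \<notin> B})"
  using mcontract_eq_mdelete_nonloop[OF assms] mcontract_eq_mdelete_loop[OF assms] by auto

lemma matroid_exchange_dual:
  assumes Bs: "matroid_of_rank E d Bs" and E: "finite E"
  shows "B \<in> Bs \<Longrightarrow> B' \<in> Bs \<Longrightarrow> y \<in> B' - B \<Longrightarrow> \<exists>x\<in>B - B'. insert y (B - {x}) \<in> Bs"
proof (induction "card (B' - B)" arbitrary: B' rule: less_induct)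
  case less
  have exchange: "\<forall>B\<in>Bs. \<forall>B'\<in>Bs. \<forall>x\<in>B - B'. \<exists>y\<in>B' - B. insert y (B - {x}) \<in> Bs"
    using Bs by (simp add: matroid_of_rank_def matroid_bases_def)
  have fin: "finite Z" "card Z = d" if "Z \<in> Bs" for Z
    using matroid_of_rank_basis[OF E Bs that] by simp_all
  show ?case
  proof (cases "B' - B = {y}")
    case True
    then have "card (B - B') = 1"
      using card_diff_sym[OF fin(1)[OF less.prems(1)] fin(1)[OF less.prems(2)]] fin(2) less.prems(1,2) by simp
    then obtain x where x: "B - B' = {x}" by (meson card_1_singletonE)
    then have "insert y (B - {x}) = B'" using True by blast
    then show ?thesis using x less.prems(2) by blast
  next
    case False
    then obtain z where z: "z \<in> B' - B" "z \<noteq> y" using less.prems(3) by blast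
    obtain w where w: "w \<in> B - B'" "insert w (B' - {z}) \<in> Bs"
      using exchange less.prems(1,2) z(1) by blast
    define B'' where "B'' = insert w (B' - {z})"
    have diff: "B'' - B = (B' - B) - {z}" using w(1) z(1) by (auto simp: B''_def)
    have "card (B'' - B) < card (B' - B)"
      unfolding diff by (rule card_Diff1_less) (use z(1) fin(1)[OF less.prems(2)] in auto)
    moreover have "y \<in> B'' - B" using diff z(2) less.prems(3) by blast
    ultimately obtain x where "x \<in> B - B''" "insert y (B - {x}) \<in> Bs"
      using less.hyps[of B''] less.prems(1) w(2) unfolding B''_def by blast
    moreover have "B - B'' \<subseteq> B - B'" using z(1) by (auto simp: B''_def)
    ultimately show ?thesis by blast
  qed
qed

lemma matroid_double_exchange:
  assumes Bs: "matroid_bases E Bs" and XY: "X \<in> Bs" "Y \<in> Bs"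
    and diff: "X - Y = {a, u}" "Y - X = {b, v}" "a \<noteq> u" "b \<noteq> v"
  shows "(insert b (X - {u}) \<in> Bs \<and> insert u (Y - {b}) \<in> Bs) \<or>
         (insert v (X - {u}) \<in> Bs \<and> insert u (Y - {v}) \<in> Bs)"
proof -
  have exchange: "\<And>P Q x. P \<in> Bs \<Longrightarrow> Q \<in> Bs \<Longrightarrow> x \<in> P - Q \<Longrightarrow> \<exists>y\<in>Q - P. insert y (P - {x}) \<in> Bs"
    using Bs unfolding matroid_bases_def by blast
  have "insert b (X - {u}) \<in> Bs \<or> insert v (X - {u}) \<in> Bs"
    using exchange[OF XY, of u] diff by auto
  moreover have "insert u (Y - {v}) \<in> Bs \<or> insert u (Y - {b}) \<in> Bs"
  proof -
    have "insert b (X - {a}) = insert u (Y - {v})" "insert v (X - {a}) = insert u (Y - {b})"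
      using diff by blast+
    then show ?thesis using exchange[OF XY, of a] diff by auto
  qed
  moreover have "insert v (X - {u}) \<in> Bs \<or> insert u (Y - {b}) \<in> Bs"
  proof -
    have "insert a (Y - {b}) = insert v (X - {u})" using diff by blast
    then show ?thesis using exchange[OF XY(2,1), of b] diff by auto
  qed
  moreover have "insert b (X - {u}) \<in> Bs \<or> insert u (Y - {v}) \<in> Bs"
  proof -
    have "insert a (Y - {v}) = insert b (X - {u})" using diff by blast
    then show ?thesis using exchange[OF XY(2,1), of v] diff by auto
  qed
  ultimately show ?thesis by blast
qed

lemma finite_dsubsets: "finite E \<Longrightarrow> finite (dsubsets E d)"
  by (rule finite_subset[of _ "Pow E"]) (auto simp: dsubsets_def)

lemma val_bases_eq_maximizers:
  fixes \<nu> :: "'a set \<Rightarrow> ereal" and w :: "'a set \<Rightarrow> int" and \<alpha> :: "'a \<Rightarrow> int"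
  assumes E: "finite E" and D: "D \<subseteq> dsubsets E d" "D \<noteq> {}"
    and \<nu>: "\<forall>B\<in>dsubsets E d. \<nu> B = (if B \<in> D then ereal (of_int (w B)) else \<infinity>)"
  shows "val_bases E d \<nu> (\<lambda>i. real_of_int (\<alpha> i)) = maximizers D (\<lambda>B. (\<Sum>x\<in>B. \<alpha> x) - w B)"
proof -
  define f where "f B = (\<Sum>x\<in>B. \<alpha> x) - w B" for B
  define t where "t B = ereal (\<Sum>i\<in>B. real_of_int (\<alpha> i)) - \<nu> B" for B
  obtain B0 where B0: "B0 \<in> maximizers D f"
    using maximizers_nonempty[OF finite_subset[OF D(1) finite_dsubsets[OF E]] D(2)] by blast
  have t_in: "t B = ereal (of_int (f B))" if "B \<in> D" for B
    using \<nu> that D(1) by (auto simp: t_def f_def)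
  have t_out: "t B = -\<infinity>" if "B \<in> dsubsets E d" "B \<notin> D" for B
    using \<nu> that by (simp add: t_def)
  have g: "gval E d \<nu> (\<lambda>i. real_of_int (\<alpha> i)) = ereal (of_int (f B0))"
    unfolding gval_def t_def[symmetric]
  proof (rule antisym)
    show "(SUP B\<in>dsubsets E d. t B) \<le> ereal (of_int (f B0))"
      using B0 t_in t_out by (intro SUP_least) (fastforce simp: maximizers_def)
    show "ereal (of_int (f B0)) \<le> (SUP B\<in>dsubsets E d. t B)"
      using SUP_upper[of B0 "dsubsets E d" t] B0 D(1) t_in by (auto simp: maximizers_def)
  qed
  have "val_bases E d \<nu> (\<lambda>i. real_of_int (\<alpha> i)) = {B\<in>D. f B = f B0}"
    using t_in t_out D(1) unfolding val_bases_def g t_def[symmetric] by force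
  also have "\<dots> = maximizers D f"
    using B0 unfolding maximizers_def by (auto intro: order_antisym)
  finally show ?thesis unfolding f_def .
qed

section \<open>From a flock to a valuation\<close>

text \<open>Axiom (MF2) is not assumed: the valuation built below from (MF1) alone already yields it.\<close>

locale mf1_flock =
  fixes E :: "'a set" and d :: nat and M :: "('a \<Rightarrow> int) \<Rightarrow> 'a set set"
  assumes finite_ground: "finite E"
    and matroid: "\<alpha> \<in> zvec E \<Longrightarrow> matroid_of_rank E d (M \<alpha>)"
    and contract_eq_delete: "\<alpha> \<in> zvec E \<Longrightarrow> i \<in> E \<Longrightarrow> mcontract (M \<alpha>) i = mdelete (M (incr \<alpha> i)) i"
begin

lemma basis_subset: "\<alpha> \<in> zvec E \<Longrightarrow> B \<in> M \<alpha> \<Longrightarrow> B \<subseteq> E"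
  and basis_finite: "\<alpha> \<in> zvec E \<Longrightarrow> B \<in> M \<alpha> \<Longrightarrow> finite B"
  and basis_card: "\<alpha> \<in> zvec E \<Longrightarrow> B \<in> M \<alpha> \<Longrightarrow> card B = d"
  using matroid_of_rank_basis[OF finite_ground matroid] by blast+

lemma bases_nonempty: "\<alpha> \<in> zvec E \<Longrightarrow> M \<alpha> \<noteq> {}"
  using matroid_of_rank_nonempty[OF matroid] .

definition nonloop :: "('a \<Rightarrow> int) \<Rightarrow> 'a \<Rightarrow> bool" where
  "nonloop \<alpha> i \<longleftrightarrow> (\<exists>B\<in>M \<alpha>. i \<in> B)"

definition elem_rank :: "('a \<Rightarrow> int) \<Rightarrow> 'a \<Rightarrow> int" where
  "elem_rank \<alpha> i = of_bool (nonloop \<alpha> i)"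

lemma bases_incr_cases:
  assumes "\<alpha> \<in> zvec E" "i \<in> E"
  shows "if nonloop \<alpha> i then M (incr \<alpha> i) = {B\<in>M \<alpha>. i \<in> B} else M \<alpha> = {B\<in>M (incr \<alpha> i). i \<notin> B}"
  unfolding nonloop_def
  by (rule iffD1[OF mcontract_eq_mdelete_iff[OF finite_ground matroid matroid[OF zvec_incr]]
        contract_eq_delete]) (use assms in simp_all)

lemma bases_incr_nonloop:
  "\<alpha> \<in> zvec E \<Longrightarrow> i \<in> E \<Longrightarrow> nonloop \<alpha> i \<Longrightarrow> M (incr \<alpha> i) = {B\<in>M \<alpha>. i \<in> B}"
  using bases_incr_cases by simp

lemma bases_incr_loop:
  "\<alpha> \<in> zvec E \<Longrightarrow> i \<in> E \<Longrightarrow> \<not> nonloop \<alpha> i \<Longrightarrow> M \<alpha> = {B\<in>M (incr \<alpha> i). i \<notin> B}"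
  using bases_incr_cases by simp

lemma loops_incr_commute:
  assumes \<alpha>: "\<alpha> \<in> zvec E" and i: "i \<in> E" and j: "j \<in> E"
    and loops: "\<not> nonloop \<alpha> i" "\<not> nonloop \<alpha> j" and nonloop: "nonloop (incr \<alpha> i) j"
  shows "nonloop (incr \<alpha> j) i"
proof (rule ccontr)
  assume loop: "\<not> nonloop (incr \<alpha> j) i"
  obtain B where B: "B \<in> M (incr \<alpha> j)" using bases_nonempty[OF zvec_incr[OF \<alpha> j]] by blast
  have "M (incr (incr \<alpha> i) j) = {B\<in>M (incr \<alpha> i). j \<in> B}"
    using bases_incr_nonloop[OF zvec_incr[OF \<alpha> i] j nonloop] .
  moreover have "M (incr \<alpha> j) = {B\<in>M (incr (incr \<alpha> j) i). i \<notin> B}"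
    using bases_incr_loop[OF zvec_incr[OF \<alpha> j] i loop] .
  ultimately have "B \<in> M (incr \<alpha> i)" "j \<in> B" "i \<notin> B"
    using B incr_commute[of \<alpha> i j] by auto
  then have "B \<in> M \<alpha>" using bases_incr_loop[OF \<alpha> i loops(1)] by simp
  then show False using loops(2) \<open>j \<in> B\<close> by (auto simp: nonloop_def)
qed

lemma nonloop_incr_mixed:
  assumes "\<alpha> \<in> zvec E" "i \<in> E" "j \<in> E" "nonloop \<alpha> i" "\<not> nonloop \<alpha> j"
  shows "\<not> nonloop (incr \<alpha> i) j" "nonloop (incr \<alpha> j) i"
proof -
  have "M (incr \<alpha> i) = {B\<in>M \<alpha>. i \<in> B}" by (rule bases_incr_nonloop[OF assms(1,2,4)])
  moreover have "M \<alpha> = {B\<in>M (incr \<alpha> j). j \<notin> B}" by (rule bases_incr_loop[OF assms(1,3,5)])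
  ultimately show "\<not> nonloop (incr \<alpha> i) j" "nonloop (incr \<alpha> j) i"
    using assms(4,5) unfolding nonloop_def by blast+
qed

lemma elem_rank_closed: "closed_form E elem_rank"
  unfolding closed_form_def
proof (intro ballI)
  fix \<alpha> i j assume \<alpha>: "\<alpha> \<in> zvec E" and i: "i \<in> E" and j: "j \<in> E"
  have "nonloop (incr \<alpha> i) j \<longleftrightarrow> nonloop (incr \<alpha> j) i" if "\<not> nonloop \<alpha> i" "\<not> nonloop \<alpha> j"
    using loops_incr_commute[OF \<alpha> i j that] loops_incr_commute[OF \<alpha> j i that(2,1)] by blast
  moreover have "nonloop (incr \<alpha> i) j \<longleftrightarrow> nonloop (incr \<alpha> j) i" if "nonloop \<alpha> i" "nonloop \<alpha> j"
    unfolding nonloop_def bases_incr_nonloop[OF \<alpha> i that(1)] bases_incr_nonloop[OF \<alpha> j that(2)]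
    by blast
  ultimately show "elem_rank \<alpha> i + elem_rank (incr \<alpha> i) j = elem_rank \<alpha> j + elem_rank (incr \<alpha> j) i"
    using nonloop_incr_mixed[OF \<alpha> i j] nonloop_incr_mixed[OF \<alpha> j i] unfolding elem_rank_def
    by (cases "nonloop \<alpha> i"; cases "nonloop \<alpha> j") simp_all
qed

definition pot :: "('a \<Rightarrow> int) \<Rightarrow> int" where
  "pot = potential E elem_rank"

lemma pot_incr: "\<alpha> \<in> zvec E \<Longrightarrow> i \<in> E \<Longrightarrow> pot (incr \<alpha> i) = pot \<alpha> + elem_rank \<alpha> i"
  unfolding pot_def using potential_incr[OF finite_ground elem_rank_closed] .

definition defect :: "'a set \<Rightarrow> ('a \<Rightarrow> int) \<Rightarrow> int" where
  "defect B \<alpha> = pot \<alpha> - (\<Sum>x\<in>B. \<alpha> x)"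

lemma defect_incr:
  "\<alpha> \<in> zvec E \<Longrightarrow> i \<in> E \<Longrightarrow> finite B \<Longrightarrow>
    defect B (incr \<alpha> i) = defect B \<alpha> + elem_rank \<alpha> i - of_bool (i \<in> B)"
  by (simp add: defect_def pot_incr sum_incr)

lemma nonloop_if_basis: "B \<in> M \<alpha> \<Longrightarrow> i \<in> B \<Longrightarrow> nonloop \<alpha> i"
  by (auto simp: nonloop_def)

lemma basis_incr_mem:
  assumes "\<alpha> \<in> zvec E" "i \<in> E" "B \<in> M \<alpha>" "i \<in> B"
  shows "B \<in> M (incr \<alpha> i)" "defect B (incr \<alpha> i) = defect B \<alpha>"
  using bases_incr_nonloop[OF assms(1,2) nonloop_if_basis[OF assms(3,4)]] assms
    defect_incr[OF assms(1,2) basis_finite[OF assms(1,3)]] nonloop_if_basis[OF assms(3,4)]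
  by (simp_all add: elem_rank_def)

lemma basis_of_incr_nonmem:
  assumes "\<alpha> \<in> zvec E" "i \<in> E" "B \<in> M (incr \<alpha> i)" "i \<notin> B"
  shows "B \<in> M \<alpha>" "defect B \<alpha> = defect B (incr \<alpha> i)"
proof -
  have loop: "\<not> nonloop \<alpha> i"
    using bases_incr_nonloop[OF assms(1,2)] assms(3,4) by blast
  show "B \<in> M \<alpha>" using bases_incr_loop[OF assms(1,2) loop] assms(3,4) by blast
  then show "defect B \<alpha> = defect B (incr \<alpha> i)"
    using defect_incr[OF assms(1,2) basis_finite[OF assms(1)]] loop assms(4) by (simp add: elem_rank_def)
qed

lemma defect_incr_mem:
  assumes "\<alpha> \<in> zvec E" "i \<in> E" "finite B" "i \<in> B"
  shows "defect B (incr \<alpha> i) \<le> defect B \<alpha>"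
    and "defect B \<alpha> \<le> defect B (incr \<alpha> i) \<Longrightarrow> B \<in> M (incr \<alpha> i) \<Longrightarrow> B \<in> M \<alpha>"
proof -
  show "defect B (incr \<alpha> i) \<le> defect B \<alpha>"
    using defect_incr[OF assms(1-3)] assms(4) by (simp add: elem_rank_def)
  assume "defect B \<alpha> \<le> defect B (incr \<alpha> i)" "B \<in> M (incr \<alpha> i)"
  then show "B \<in> M \<alpha>"
    using defect_incr[OF assms(1-3)] bases_incr_nonloop[OF assms(1,2)] assms(4)
    by (cases "nonloop \<alpha> i") (auto simp: elem_rank_def)
qed

lemma defect_incr_nonmem:
  assumes "\<alpha> \<in> zvec E" "i \<in> E" "finite B" "i \<notin> B"
  shows "defect B \<alpha> \<le> defect B (incr \<alpha> i)"
    and "defect B (incr \<alpha> i) \<le> defect B \<alpha> \<Longrightarrow> B \<in> M \<alpha> \<Longrightarrow> B \<in> M (incr \<alpha> i)"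
proof -
  show "defect B \<alpha> \<le> defect B (incr \<alpha> i)"
    using defect_incr[OF assms(1-3)] assms(4) by (simp add: elem_rank_def)
  assume "defect B (incr \<alpha> i) \<le> defect B \<alpha>" "B \<in> M \<alpha>"
  then show "B \<in> M (incr \<alpha> i)"
    using defect_incr[OF assms(1-3)] bases_incr_loop[OF assms(1,2)] assms(4)
    by (cases "nonloop \<alpha> i") (auto simp: elem_rank_def)
qed

text \<open>Induction on the distance of \<alpha> and \<beta>: at a coordinate where they differ, either \<beta> moves
  towards \<alpha> keeping B a basis at the same defect, or \<alpha> moves towards \<beta> without increasing the
  defect.\<close>

lemma defect_minimal:
  assumes "\<alpha> \<in> zvec E" "\<beta> \<in> zvec E" "B \<in> M \<beta>"
  shows "defect B \<beta> \<le> defect B \<alpha> \<and> (defect B \<alpha> \<le> defect B \<beta> \<longrightarrow> B \<in> M \<alpha>)"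
  using assms
proof (induction "nat (l1_norm E (\<lambda>y. \<alpha> y - \<beta> y))" arbitrary: \<alpha> \<beta> rule: less_induct)
  case less
  note \<alpha> = less.prems(1) and \<beta> = less.prems(2) and B = less.prems(3)
  have fB: "finite B" using basis_finite[OF \<beta> B] .
  let ?D = "\<lambda>\<alpha> \<beta>. l1_norm E (\<lambda>y. \<alpha> y - \<beta> y)"
  have IH: "defect B \<beta>' \<le> defect B \<alpha>' \<and> (defect B \<alpha>' \<le> defect B \<beta>' \<longrightarrow> B \<in> M \<alpha>')"
    if "\<alpha>' \<in> zvec E" "\<beta>' \<in> zvec E" "B \<in> M \<beta>'" "?D \<alpha>' \<beta>' < ?D \<alpha> \<beta>" for \<alpha>' \<beta>'
    using less.hyps[OF _ that(1-3)] that(4) l1_norm_nonneg[of E "\<lambda>y. \<alpha>' y - \<beta>' y"]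
    by (simp add: nat_less_eq_zless)
  have D_incr: "?D (incr \<alpha>' x) \<beta>' = ?D \<alpha>' \<beta>' - \<bar>\<alpha>' x - \<beta>' x\<bar> + \<bar>\<alpha>' x + 1 - \<beta>' x\<bar>"
    "?D \<alpha>' (incr \<beta>' x) = ?D \<alpha>' \<beta>' - \<bar>\<alpha>' x - \<beta>' x\<bar> + \<bar>\<alpha>' x - \<beta>' x - 1\<bar>"
    if "x \<in> E" for \<alpha>' \<beta>' x
    using l1_norm_diff_update[OF finite_ground that, of \<alpha>' "\<alpha>' x + 1" \<beta>' "\<beta>' x"]
      l1_norm_diff_update[OF finite_ground that, of \<alpha>' "\<alpha>' x" \<beta>' "\<beta>' x + 1"]
    by (simp_all add: incr_def algebra_simps)
  show ?case
  proof (cases "\<forall>x\<in>E. \<alpha> x = \<beta> x")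
    case True
    then have "\<alpha> = \<beta>" using \<alpha> \<beta> by (auto simp: zvec_def fun_eq_iff)
    then show ?thesis using B by simp
  next
    case False
    then obtain x where x: "x \<in> E" "\<alpha> x \<noteq> \<beta> x" by blast
    consider (raise_\<beta>) "x \<in> B" "\<beta> x < \<alpha> x" | (lower_\<beta>) "x \<notin> B" "\<alpha> x < \<beta> x"
      | (raise_\<alpha>) "x \<in> B" "\<alpha> x < \<beta> x" | (lower_\<alpha>) "x \<notin> B" "\<beta> x < \<alpha> x"
      using x(2) by linarith
    then show ?thesis
    proof cases
      case raise_\<beta>
      then show ?thesis
        using IH[OF \<alpha> zvec_incr[OF \<beta> x(1)] basis_incr_mem(1)[OF \<beta> x(1) B]] D_incr(2)[OF x(1), of \<alpha> \<beta>]
          basis_incr_mem(2)[OF \<beta> x(1) B] by simp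
    next
      case lower_\<beta>
      have \<beta>': "decr \<beta> x \<in> zvec E" "incr (decr \<beta> x) x = \<beta>" using zvec_decr[OF \<beta> x(1)] by simp_all
      then show ?thesis
        using IH[OF \<alpha> \<beta>'(1) basis_of_incr_nonmem(1)[OF \<beta>'(1) x(1)]] D_incr(2)[OF x(1), of \<alpha> "decr \<beta> x"]
          basis_of_incr_nonmem(2)[OF \<beta>'(1) x(1)] B lower_\<beta> by simp
    next
      case raise_\<alpha>
      then show ?thesis
        using IH[OF zvec_incr[OF \<alpha> x(1)] \<beta> B] D_incr(1)[OF x(1), of \<alpha> \<beta>] defect_incr_mem[OF \<alpha> x(1) fB]
        by fastforce
    next
      case lower_\<alpha>
      have \<alpha>': "decr \<alpha> x \<in> zvec E" "incr (decr \<alpha> x) x = \<alpha>" using zvec_decr[OF \<alpha> x(1)] by simp_all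
      have "?D (decr \<alpha> x) \<beta> < ?D \<alpha> \<beta>" using D_incr(1)[OF x(1), of "decr \<alpha> x" \<beta>] lower_\<alpha> by simp
      then show ?thesis
        using IH[OF \<alpha>'(1) \<beta> B] defect_incr_nonmem[OF \<alpha>'(1) x(1) fB lower_\<alpha>(1)] \<alpha>'(2) by auto
    qed
  qed
qed

definition support :: "'a set set" where
  "support = {B. \<exists>\<beta>\<in>zvec E. B \<in> M \<beta>}"

definition weight :: "'a set \<Rightarrow> int" where
  "weight B = - defect B (SOME \<beta>. \<beta> \<in> zvec E \<and> B \<in> M \<beta>)"

lemma support_subset: "support \<subseteq> dsubsets E d"
  using basis_subset basis_card by (auto simp: support_def dsubsets_def)

lemma bases_subset_support: "\<alpha> \<in> zvec E \<Longrightarrow> M \<alpha> \<subseteq> support"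
  by (auto simp: support_def)

lemma support_nonempty: "support \<noteq> {}"
proof -
  have "(\<lambda>_. 0) \<in> zvec E" by (simp add: zvec_def)
  then show ?thesis using bases_subset_support bases_nonempty by blast
qed

lemma finite_support: "finite support"
  using finite_subset[OF support_subset finite_dsubsets[OF finite_ground]] .

lemma support_basis: "B \<in> support \<Longrightarrow> finite B \<and> B \<subseteq> E \<and> card B = d"
  using support_subset finite_subset[OF _ finite_ground] by (auto simp: dsubsets_def)

lemma weight_le_pot:
  assumes \<alpha>: "\<alpha> \<in> zvec E" and B: "B \<in> support"
  shows "(\<Sum>x\<in>B. \<alpha> x) - weight B \<le> pot \<alpha>"
    and "(\<Sum>x\<in>B. \<alpha> x) - weight B = pot \<alpha> \<longleftrightarrow> B \<in> M \<alpha>"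
proof -
  define \<beta> where "\<beta> = (SOME \<beta>. \<beta> \<in> zvec E \<and> B \<in> M \<beta>)"
  have \<beta>: "\<beta> \<in> zvec E" "B \<in> M \<beta>"
    using someI_ex[of "\<lambda>\<beta>. \<beta> \<in> zvec E \<and> B \<in> M \<beta>"] B unfolding \<beta>_def support_def by blast+
  have w: "(\<Sum>x\<in>B. \<alpha> x) - weight B = pot \<alpha> - defect B \<alpha> + defect B \<beta>"
    by (simp add: weight_def defect_def \<beta>_def)
  show "(\<Sum>x\<in>B. \<alpha> x) - weight B \<le> pot \<alpha>"
    using defect_minimal[OF \<alpha> \<beta>] w by simp
  show "(\<Sum>x\<in>B. \<alpha> x) - weight B = pot \<alpha> \<longleftrightarrow> B \<in> M \<alpha>"
    using defect_minimal[OF \<alpha> \<beta>] defect_minimal[OF \<beta>(1) \<alpha>, of B] w by auto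
qed

lemma bases_eq_maximizers:
  assumes \<alpha>: "\<alpha> \<in> zvec E"
  shows "M \<alpha> = maximizers support (\<lambda>B. (\<Sum>x\<in>B. \<alpha> x) - weight B)"
proof (intro set_eqI iffI)
  fix B assume "B \<in> M \<alpha>"
  then show "B \<in> maximizers support (\<lambda>B. (\<Sum>x\<in>B. \<alpha> x) - weight B)"
    using weight_le_pot[OF \<alpha>] bases_subset_support[OF \<alpha>] by (force simp: maximizers_def)
next
  fix B assume B: "B \<in> maximizers support (\<lambda>B. (\<Sum>x\<in>B. \<alpha> x) - weight B)"
  obtain B0 where "B0 \<in> M \<alpha>" using bases_nonempty[OF \<alpha>] by blast
  then have "pot \<alpha> \<le> (\<Sum>x\<in>B. \<alpha> x) - weight B"
    using B weight_le_pot(2)[OF \<alpha>, of B0] bases_subset_support[OF \<alpha>] by (force simp: maximizers_def)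
  then show "B \<in> M \<alpha>"
    using B weight_le_pot[OF \<alpha>, of B] by (simp add: maximizers_def)
qed

definition nu :: "'a set \<Rightarrow> ereal" where
  "nu B = (if B \<in> support then ereal (of_int (weight B)) else \<infinity>)"

lemma bases_eq_val_bases: "\<alpha> \<in> zvec E \<Longrightarrow> M \<alpha> = val_bases E d nu (\<lambda>i. real_of_int (\<alpha> i))"
  using val_bases_eq_maximizers[OF finite_ground support_subset support_nonempty, of nu weight]
    bases_eq_maximizers by (simp add: nu_def)

lemma weight_bound: "B \<in> support \<Longrightarrow> \<bar>weight B\<bar> \<le> (\<Sum>Z\<in>support. \<bar>weight Z\<bar>)"
  using member_le_sum[of B support "\<lambda>Z. \<bar>weight Z\<bar>"] finite_support by simp

text \<open>Any integer weighting s of a part S of the ground set can be realised, on the bases B with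
  C \<subseteq> B \<subseteq> C \<union> S, by one matroid of the flock: add a huge bonus on C and a huge
  penalty outside C \<union> S.\<close>

lemma localize:
  fixes s :: "'a \<Rightarrow> int"
  assumes CS: "C \<inter> S = {}" "C \<subseteq> E" "S \<subseteq> E" and s: "\<And>x. x \<notin> S \<Longrightarrow> s x = 0"
    and F: "{Z\<in>support. C \<subseteq> Z \<and> Z \<subseteq> C \<union> S} \<noteq> {}"
  shows "\<exists>\<alpha>\<in>zvec E. M \<alpha> = maximizers {Z\<in>support. C \<subseteq> Z \<and> Z \<subseteq> C \<union> S} (\<lambda>Z. (\<Sum>x\<in>Z. s x) - weight Z)"
proof -
  define F where "F = {Z\<in>support. C \<subseteq> Z \<and> Z \<subseteq> C \<union> S}"
  define K where "K = (\<Sum>Z\<in>support. \<bar>weight Z\<bar>) + (\<Sum>x\<in>E. \<bar>s x\<bar>)"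
  define L where "L = 2 * K + 1"
  define h where "h x = L * of_bool (x \<in> C) - L * of_bool (x \<in> E - (C \<union> S))" for x
  define \<alpha> where "\<alpha> x = s x + h x" for x
  have \<alpha>: "\<alpha> \<in> zvec E" using s CS(2,3) by (auto simp: zvec_def \<alpha>_def h_def)
  have "L \<ge> 0" by (simp add: L_def K_def sum_nonneg)
  have g: "\<bar>(\<Sum>x\<in>Z. s x) - weight Z\<bar> \<le> K" if "Z \<in> support" for Z
  proof -
    have "\<bar>\<Sum>x\<in>Z. s x\<bar> \<le> (\<Sum>x\<in>E. \<bar>s x\<bar>)"
      using support_basis[OF that] finite_ground
      by (intro order_trans[OF sum_abs sum_mono2]) auto
    then show ?thesis using weight_bound[OF that] unfolding K_def by linarith
  qed
  have "finite C" using CS(2) finite_ground finite_subset by blast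
  note bonus = sum_bonus_penalty[where E = E and S = S, OF _ _ this \<open>L \<ge> 0\<close>, folded h_def]
  have h_in: "(\<Sum>x\<in>Z. h x) = L * card C" if "Z \<in> F" for Z
    using that support_basis bonus(1) by (auto simp: F_def)
  have h_out: "(\<Sum>x\<in>Z. h x) \<le> L * card C - L" if "Z \<in> support - F" for Z
    using that support_basis bonus(2) by (auto simp: F_def)
  have "M \<alpha> = maximizers support (\<lambda>Z. ((\<Sum>x\<in>Z. s x) - weight Z) + (\<Sum>x\<in>Z. h x))"
    using bases_eq_maximizers[OF \<alpha>] by (simp add: \<alpha>_def sum.distrib algebra_simps)
  also have "\<dots> = maximizers F (\<lambda>Z. (\<Sum>x\<in>Z. s x) - weight Z)"
  proof (rule maximizers_dominant_penalty[where c = "L * int (card C)"])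
    show "F \<subseteq> support" "F \<noteq> {}" using F by (auto simp: F_def)
  qed (use g h_in h_out in \<open>auto simp: L_def\<close>)
  finally show ?thesis using \<alpha> unfolding F_def by blast
qed

definition exchangeable :: "'a set \<Rightarrow> 'a set \<Rightarrow> 'a \<Rightarrow> bool" where
  "exchangeable X Y u \<longleftrightarrow> (\<exists>v\<in>Y - X. insert v (X - {u}) \<in> support \<and> insert u Y - {v} \<in> support \<and>
     weight (insert v (X - {u})) + weight (insert u Y - {v}) \<le> weight X + weight Y)"

lemma support_between_double_exchange:
  assumes X: "X \<in> support" and Y: "Y \<in> support"
    and diff: "X - Y = {a, u}" "Y - X = {b, v}" "a \<noteq> u" "b \<noteq> v"
    and Z: "Z \<in> support" "X \<inter> Y \<subseteq> Z" "Z \<subseteq> X \<union> Y"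
  shows "Z = X \<or> Z = Y \<or> (\<exists>p\<in>{a, u}. \<exists>q\<in>{b, v}. Z = insert p (insert q (X \<inter> Y)))"
proof -
  define C where "C = X \<inter> Y"
  have XC: "X = insert a (insert u C)" and YC: "Y = insert b (insert v C)" and "X \<union> Y = C \<union> {a, u, b, v}"
    using diff by (auto simp: C_def)
  have "a \<notin> C" "u \<notin> C" "finite C" using diff support_basis[OF X] by (auto simp: C_def)
  then have "card X = card C + 2" using diff(3) by (simp add: XC)
  then have "finite Z" "card Z = card C + 2" using Z(1) support_basis[of Z] support_basis[OF X] by auto
  then obtain p q where pq: "p \<noteq> q" "p \<notin> C" "q \<notin> C" "Z = insert p (insert q C)"
    using card_add_two_insert Z(2) unfolding C_def by blast
  then have "p \<in> {a, u, b, v}" "q \<in> {a, u, b, v}" using Z(3) \<open>X \<union> Y = C \<union> {a, u, b, v}\<close> by auto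
  then consider "p \<in> {a, u}" "q \<in> {a, u}" | "p \<in> {b, v}" "q \<in> {b, v}"
    | "p \<in> {a, u}" "q \<in> {b, v}" | "q \<in> {a, u}" "p \<in> {b, v}"
    by blast
  then show ?thesis
  proof cases
    case 1
    then have "Z = X" using pq(1,4) XC by auto
    then show ?thesis by simp
  next
    case 2
    then have "Z = Y" using pq(1,4) YC by auto
    then show ?thesis by simp
  next
    case 3
    then show ?thesis using pq(4) unfolding C_def by blast
  next
    case 4
    then have "Z = insert q (insert p (X \<inter> Y))" using pq(4) unfolding C_def by (simp add: insert_commute)
    then show ?thesis using 4 by blast
  qed
qed

lemma four_point_localize:
  fixes s :: "'a \<Rightarrow> int"
  assumes X: "X \<in> support" and Y: "Y \<in> support"
    and diff: "X - Y = {a, u}" "Y - X = {b, v}" "a \<noteq> u" "b \<noteq> v"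
    and sX: "s a + s u = weight X" and sY: "s b + s v = weight Y"
    and s_le: "\<And>p q. p \<in> {a, u} \<Longrightarrow> q \<in> {b, v} \<Longrightarrow> insert p (insert q (X \<inter> Y)) \<in> support \<Longrightarrow>
      s p + s q \<le> weight (insert p (insert q (X \<inter> Y)))"
  obtains \<alpha> where "\<alpha> \<in> zvec E" "X \<in> M \<alpha>" "Y \<in> M \<alpha>"
    "\<And>p q. p \<in> {a, u} \<Longrightarrow> q \<in> {b, v} \<Longrightarrow> insert p (insert q (X \<inter> Y)) \<in> M \<alpha> \<Longrightarrow>
      s p + s q = weight (insert p (insert q (X \<inter> Y)))"
proof -
  define C where "C = X \<inter> Y"
  define S where "S = {a, u, b, v}"
  define s0 where "s0 z = (if z \<in> S then s z else 0)" for z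
  let ?P = "\<lambda>p q. insert p (insert q C)"
  have XC: "X = ?P a u" and YC: "Y = ?P b v" using diff by (auto simp: C_def)
  have "C \<subseteq> E" "S \<subseteq> E"
    using diff support_basis[OF X] support_basis[OF Y] by (auto simp: C_def S_def)
  have distinct: "a \<notin> C" "u \<notin> C" "b \<notin> C" "v \<notin> C" "a \<noteq> b" "a \<noteq> v" "u \<noteq> b" "u \<noteq> v"
    using diff by (auto simp: C_def)
  have finC: "finite C" using support_basis[OF X] by (simp add: C_def)
  have s0_pair: "(\<Sum>z\<in>?P p q. s0 z) = s p + s q" if "p \<in> S" "q \<in> S" "p \<noteq> q" for p q
  proof -
    have "p \<notin> C" "q \<notin> C" using that distinct by (auto simp: S_def)
    moreover have "(\<Sum>z\<in>C. s0 z) = 0" using distinct by (intro sum.neutral) (auto simp: s0_def S_def)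
    ultimately show ?thesis using finC that by (simp add: s0_def)
  qed
  define F where "F = {Z\<in>support. C \<subseteq> Z \<and> Z \<subseteq> C \<union> S}"
  define f where "f Z = (\<Sum>z\<in>Z. s0 z) - weight Z" for Z
  have XF: "X \<in> F" "Y \<in> F" using X Y by (auto simp: F_def XC YC S_def)
  have "C \<inter> S = {}" "\<And>z. z \<notin> S \<Longrightarrow> s0 z = 0" using distinct by (auto simp: S_def s0_def)
  then obtain \<alpha> where \<alpha>: "\<alpha> \<in> zvec E" "M \<alpha> = maximizers F f"
    using localize[of C S s0] \<open>C \<subseteq> E\<close> \<open>S \<subseteq> E\<close> XF unfolding F_def f_def by blast
  have f_pair: "f (?P p q) = s p + s q - weight (?P p q)" if "p \<in> S" "q \<in> S" "p \<noteq> q" for p q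
    using s0_pair[OF that] by (simp add: f_def)
  have f_XY: "f X = 0" "f Y = 0"
    using f_pair[of a u] f_pair[of b v] sX sY diff(3,4) by (simp_all add: S_def XC YC)
  have f_mixed: "f (?P p q) \<le> 0" if "p \<in> {a, u}" "q \<in> {b, v}" "?P p q \<in> support" for p q
    using that f_pair[of p q] s_le[of p q] distinct unfolding C_def S_def by auto
  have "C \<union> S = X \<union> Y" using diff by (auto simp: C_def S_def)
  then have f_le: "f Z \<le> 0" if "Z \<in> F" for Z
    using support_between_double_exchange[OF X Y diff, of Z] that f_XY f_mixed
    unfolding F_def C_def by auto
  have M\<alpha>: "M \<alpha> = {Z\<in>F. f Z = 0}"
    using \<alpha>(2) XF(1) f_XY f_le by (auto simp: maximizers_def) (metis antisym)
  show thesis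
  proof (rule that[OF \<alpha>(1)])
    show "X \<in> M \<alpha>" "Y \<in> M \<alpha>" using M\<alpha> XF f_XY by simp_all
    show "s p + s q = weight (insert p (insert q (X \<inter> Y)))"
      if "p \<in> {a, u}" "q \<in> {b, v}" "insert p (insert q (X \<inter> Y)) \<in> M \<alpha>" for p q
      using that M\<alpha> f_pair[of p q] distinct unfolding C_def S_def by auto
  qed
qed

lemma exchangeable_two:
  assumes X: "X \<in> support" and Y: "Y \<in> support"
    and diff: "X - Y = {a, u}" "Y - X = {b, v}" "a \<noteq> u" "b \<noteq> v"
  shows "exchangeable X Y u"
proof (rule ccontr)
  assume no_exchange: "\<not> exchangeable X Y u"
  let ?P = "\<lambda>p q. insert p (insert q (X \<inter> Y))"
  have sets: "insert b (X - {u}) = ?P a b" "insert u (Y - {b}) = ?P u v" "insert u Y - {b} = ?P u v"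
      "insert v (X - {u}) = ?P a v" "insert u (Y - {v}) = ?P u b" "insert u Y - {v} = ?P u b"
    using diff by auto
  have excess: "?P a b \<in> support \<Longrightarrow> ?P u v \<in> support \<Longrightarrow> weight X + weight Y < weight (?P a b) + weight (?P u v)"
    "?P a v \<in> support \<Longrightarrow> ?P u b \<in> support \<Longrightarrow> weight X + weight Y < weight (?P a v) + weight (?P u b)"
    using no_exchange diff sets unfolding exchangeable_def by (auto simp: not_le)
  then obtain sa su sb sv where s: "sa + su = weight X" "sb + sv = weight Y"
    "?P a b \<in> support \<longrightarrow> sa + sb \<le> weight (?P a b)" "?P u v \<in> support \<longrightarrow> su + sv \<le> weight (?P u v)"
    "?P a v \<in> support \<longrightarrow> sa + sv \<le> weight (?P a v)" "?P u b \<in> support \<longrightarrow> su + sb \<le> weight (?P u b)"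
    by (rule four_point_weights)
  define s where "s z = (if z = a then sa else if z = u then su else if z = b then sb else sv)" for z
  have s_vals: "s a = sa" "s u = su" "s b = sb" "s v = sv" using diff by (auto simp: s_def)
  obtain \<alpha> where \<alpha>: "\<alpha> \<in> zvec E" "X \<in> M \<alpha>" "Y \<in> M \<alpha>"
    and tight: "\<And>p q. p \<in> {a, u} \<Longrightarrow> q \<in> {b, v} \<Longrightarrow> ?P p q \<in> M \<alpha> \<Longrightarrow> s p + s q = weight (?P p q)"
    by (rule four_point_localize[OF X Y diff, of s]) (use s s_vals in auto)
  have "matroid_bases E (M \<alpha>)" using matroid[OF \<alpha>(1)] by (simp add: matroid_of_rank_def)
  then have "(?P a b \<in> M \<alpha> \<and> ?P u v \<in> M \<alpha>) \<or> (?P a v \<in> M \<alpha> \<and> ?P u b \<in> M \<alpha>)"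
    using matroid_double_exchange[OF _ \<alpha>(2,3) diff] sets by metis
  then show False
  proof
    assume "?P a b \<in> M \<alpha> \<and> ?P u v \<in> M \<alpha>"
    then show False
      using tight[of a b] tight[of u v] excess(1) s(1,2) s_vals bases_subset_support[OF \<alpha>(1)] by auto
  next
    assume "?P a v \<in> M \<alpha> \<and> ?P u b \<in> M \<alpha>"
    then show False
      using tight[of a v] tight[of u b] excess(2) s(1,2) s_vals bases_subset_support[OF \<alpha>(1)] by auto
  qed
qed

text \<open>Reward the elements of Y - X so strongly that Y is the only optimum avoiding a, and tune the
  reward t' for a so that the best set through a ties with Y.\<close>

lemma bases_through_and_avoiding:
  assumes X: "X \<in> support" and Y: "Y \<in> support" and a: "a \<in> X - Y"
  obtains \<alpha> Z where "\<alpha> \<in> zvec E" "Y \<in> M \<alpha>" "Z \<in> M \<alpha>" "a \<in> Z" "X \<inter> Y \<subseteq> Z"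
proof -
  define C where "C = X \<inter> Y"
  define Q where "Q = Y - X"
  define S where "S = (X - Y) \<union> Q"
  define F where "F = {Z\<in>support. C \<subseteq> Z \<and> Z \<subseteq> C \<union> S}"
  define K where "K = (\<Sum>Z\<in>support. \<bar>weight Z\<bar>)"
  define t where "t = 2 * K + 1"
  define g where "g Z = t * int (card (Z \<inter> Q)) - weight Z" for Z
  have XF: "X \<in> F" and YF: "Y \<in> F" using X Y by (auto simp: F_def C_def S_def Q_def)
  have "finite {Z\<in>F. a \<in> Z}" using finite_support by (simp add: F_def)
  then obtain Zs where Zs: "Zs \<in> maximizers {Z\<in>F. a \<in> Z} g"
    using maximizers_nonempty[of "{Z\<in>F. a \<in> Z}" g] XF a by blast
  define t' where "t' = (t * int (card Q) - weight Y) - g Zs"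
  define s where "s x = t * of_bool (x \<in> Q) + t' * of_bool (x \<in> {a})" for x
  define f where "f Z = (\<Sum>x\<in>Z. s x) - weight Z" for Z
  have f_g: "f Z = g Z + t' * of_bool (a \<in> Z)" if "Z \<in> support" for Z
    using support_basis[OF that]
    by (simp add: f_def g_def s_def sum.distrib sum_of_bool_mult[where A = Q] sum_of_bool_mult[where A = "{a}"])
  have fY: "f Y = t * int (card Q) - weight Y"
    using f_g[OF Y] a by (simp add: g_def Q_def Int_absorb1)
  have f_le: "f Z \<le> f Y" if ZF: "Z \<in> F" for Z
  proof (cases "a \<in> Z")
    case True
    then have "g Z \<le> g Zs" using Zs ZF by (auto simp: maximizers_def)
    then show ?thesis using f_g ZF True fY by (simp add: F_def t'_def)
  next
    case False
    show ?thesis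
    proof (cases "Q \<subseteq> Z")
      case True
      have "Y \<subseteq> Z" using True ZF by (auto simp: F_def C_def Q_def)
      then have "Y = Z"
        using card_subset_eq[of Z Y] support_basis[of Z] support_basis[OF Y] ZF by (simp add: F_def)
      then show ?thesis by simp
    next
      case Q_not_in: False
      have "finite Q" using support_basis[OF Y] by (simp add: Q_def)
      then have "card (Z \<inter> Q) < card Q" using Q_not_in by (intro psubset_card_mono) auto
      then have "t * int (card (Z \<inter> Q)) \<le> t * (int (card Q) - 1)" by (simp add: t_def K_def sum_nonneg)
      then have "t * int (card (Z \<inter> Q)) \<le> t * int (card Q) - t" by (simp add: algebra_simps)
      moreover have "\<bar>weight Z\<bar> \<le> K" "\<bar>weight Y\<bar> \<le> K" using weight_bound ZF Y by (auto simp: F_def K_def)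
      moreover have "f Z = t * int (card (Z \<inter> Q)) - weight Z" using f_g[of Z] ZF False by (simp add: F_def g_def)
      ultimately show ?thesis using fY t_def by linarith
    qed
  qed
  have "Zs \<in> F" "a \<in> Zs" using Zs by (auto simp: maximizers_def)
  then have f_Zs: "f Zs = f Y" using f_g fY by (simp add: F_def t'_def)
  have "C \<inter> S = {}" "C \<subseteq> E" "S \<subseteq> E" "\<And>x. x \<notin> S \<Longrightarrow> s x = 0"
    using support_basis X Y a by (auto simp: C_def S_def Q_def s_def)
  then obtain \<alpha> where \<alpha>: "\<alpha> \<in> zvec E" "M \<alpha> = maximizers F f"
    using localize[of C S s] XF unfolding F_def f_def by blast
  have "Y \<in> M \<alpha>" "Zs \<in> M \<alpha>"
    using \<alpha>(2) YF \<open>Zs \<in> F\<close> f_le f_Zs by (auto simp: maximizers_def)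
  then show thesis using that \<alpha>(1) \<open>a \<in> Zs\<close> \<open>Zs \<in> F\<close> by (auto simp: F_def C_def)
qed

lemma support_insert_exchange:
  assumes X: "X \<in> support" and Y: "Y \<in> support" and a: "a \<in> X - Y"
  shows "\<exists>b\<in>Y - X. insert a (Y - {b}) \<in> support"
proof -
  obtain \<alpha> Z where \<alpha>: "\<alpha> \<in> zvec E" "Y \<in> M \<alpha>" "Z \<in> M \<alpha>" and Z: "a \<in> Z" "X \<inter> Y \<subseteq> Z"
    using bases_through_and_avoiding[OF X Y a] .
  obtain b where "b \<in> Y - Z" "insert a (Y - {b}) \<in> M \<alpha>"
    using matroid_exchange_dual[OF matroid[OF \<alpha>(1)] finite_ground \<alpha>(2,3)] Z(1) a by blast
  moreover have "b \<in> Y - X" using \<open>b \<in> Y - Z\<close> Z(2) by blast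
  ultimately show ?thesis using bases_subset_support[OF \<alpha>(1)] by blast
qed

lemma cheapest_exchange:
  assumes X: "X \<in> support" and Y: "Y \<in> support" and a: "a \<in> X - Y"
  obtains b where "b \<in> Y - X" "insert a (Y - {b}) \<in> support"
    "\<And>x. x \<in> Y - X \<Longrightarrow> insert a (Y - {x}) \<in> support \<Longrightarrow> insert x (X - {u}) \<in> support \<Longrightarrow>
      insert b (X - {u}) \<in> support \<and>
      weight (insert b (X - {u})) + weight (insert a (Y - {b}))
        \<le> weight (insert x (X - {u})) + weight (insert a (Y - {x}))"
proof -
  define cost where "cost x = weight (insert x (X - {u})) + weight (insert a (Y - {x}))" for x
  define Ok where "Ok = {x\<in>Y - X. insert a (Y - {x}) \<in> support \<and> insert x (X - {u}) \<in> support}"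
  have "finite Ok" using support_basis[OF Y] by (simp add: Ok_def)
  show thesis
  proof (cases "Ok = {}")
    case True
    then show ?thesis using that support_insert_exchange[OF X Y a] by (auto simp: Ok_def)
  next
    case False
    then obtain b where "b \<in> maximizers Ok (\<lambda>x. - cost x)"
      using maximizers_nonempty[OF \<open>finite Ok\<close>] by blast
    then have "b \<in> Ok" "\<forall>x\<in>Ok. cost b \<le> cost x" by (auto simp: maximizers_def)
    then show ?thesis by (intro that[of b]) (auto simp: Ok_def cost_def)
  qed
qed

lemma exchangeable_by_reduction:
  assumes X: "X \<in> support" and u: "u \<in> X - Y" and a: "a \<in> X - Y" "a \<noteq> u"
    and b: "b \<in> Y - X"
    and b_min: "\<And>x. x \<in> Y - X \<Longrightarrow> insert a (Y - {x}) \<in> support \<Longrightarrow> insert x (X - {u}) \<in> support \<Longrightarrow>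
      insert b (X - {u}) \<in> support \<and>
      weight (insert b (X - {u})) + weight (insert a (Y - {b}))
        \<le> weight (insert x (X - {u})) + weight (insert a (Y - {x}))"
    and ex_X: "exchangeable X (insert a (Y - {b})) u"
    and ex_Z: "\<And>Z. Z \<in> support \<Longrightarrow> Z - Y = {a, u} \<Longrightarrow> exchangeable Z Y a"
  shows "exchangeable X Y u"
proof -
  define Y' where "Y' = insert a (Y - {b})"
  obtain v where v: "v \<in> Y' - X" "insert v (X - {u}) \<in> support" "insert u Y' - {v} \<in> support"
    "weight (insert v (X - {u})) + weight (insert u Y' - {v}) \<le> weight X + weight Y'"
    using ex_X unfolding exchangeable_def Y'_def by blast
  have vYX: "v \<in> Y - X" "v \<noteq> b" using v(1) a by (auto simp: Y'_def)
  define Z where "Z = insert u Y' - {v}"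
  have "Z - Y = {a, u}" "Y - Z = {b, v}" using a u b vYX by (auto simp: Z_def Y'_def)
  then obtain x where x: "x \<in> {b, v}" "insert x (Z - {a}) \<in> support" "insert a Y - {x} \<in> support"
    "weight (insert x (Z - {a})) + weight (insert a Y - {x}) \<le> weight Z + weight Y"
    using ex_Z[of Z] v(3) unfolding exchangeable_def Z_def by auto
  show ?thesis
  proof (cases "x = b")
    case True
    have "insert x (Z - {a}) = insert u Y - {v}" "insert a Y - {x} = Y'"
      using True a u b vYX by (auto simp: Z_def Y'_def)
    then show ?thesis
      using v vYX x unfolding exchangeable_def Z_def by (intro bexI[of _ v]) auto
  next
    case False
    then have "x = v" using x(1) by blast
    have sets: "insert x (Z - {a}) = insert u Y - {b}" "insert a Y - {x} = insert a (Y - {v})"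
      using \<open>x = v\<close> a u b vYX by (auto simp: Z_def Y'_def)
    then have "insert b (X - {u}) \<in> support"
      "weight (insert b (X - {u})) + weight Y' \<le> weight (insert v (X - {u})) + weight (insert a (Y - {v}))"
      using b_min[OF vYX(1)] x(3) v(2) by (auto simp: Y'_def)
    then show ?thesis
      using b v x sets unfolding exchangeable_def Z_def by (intro bexI[of _ b]) auto
  qed
qed

lemma exchangeable_all: "X \<in> support \<Longrightarrow> Y \<in> support \<Longrightarrow> u \<in> X - Y \<Longrightarrow> exchangeable X Y u"
proof (induction "card (X - Y)" arbitrary: X Y u rule: less_induct)
  case less
  note X = less.prems(1) and Y = less.prems(2) and u = less.prems(3)
  have fin: "finite X" "finite Y" using support_basis X Y by auto
  have card_eq: "card (X - Y) = card (Y - X)"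
    using card_diff_sym[OF fin] support_basis X Y by simp
  have "card (X - Y) \<noteq> 0" using u fin by auto
  then consider "card (X - Y) = 1" | "card (X - Y) = 2" | "card (X - Y) \<ge> 3" by linarith
  then show ?case
  proof cases
    case 1
    then have XY: "X - Y = {u}" using u by (metis card_1_singletonE singletonD)
    obtain v where YX: "Y - X = {v}" using 1 card_eq by (metis card_1_singletonE)
    have "insert v (X - {u}) = Y" "insert u Y - {v} = X" using XY YX by blast+
    then show ?thesis using X Y YX unfolding exchangeable_def by auto
  next
    case 2
    then obtain p q where "X - Y = {p, q}" "p \<noteq> q" by (meson card_2_iff)
    then obtain a where XY: "X - Y = {a, u}" "a \<noteq> u" using u by auto
    obtain b v where YX: "Y - X = {b, v}" "b \<noteq> v" using 2 card_eq by (metis card_2_iff)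
    show ?thesis using exchangeable_two[OF X Y XY(1) YX(1) XY(2) YX(2)] .
  next
    case 3
    then have "card ((X - Y) - {u}) \<noteq> 0" using u fin by simp
    then obtain a where "a \<in> (X - Y) - {u}" by (metis card.empty ex_in_conv)
    then have a: "a \<in> X - Y" "a \<noteq> u" by auto
    show ?thesis
    proof (rule cheapest_exchange[OF X Y a(1), of u], goal_cases)
      case (1 b)
      have "X - insert a (Y - {b}) = (X - Y) - {a}" using 1(1) by auto
      then have "card (X - insert a (Y - {b})) < card (X - Y)"
        using a(1) fin 3 by simp
      then have "exchangeable X (insert a (Y - {b})) u"
        using less.hyps X 1(2) u a by auto
      moreover have "exchangeable Z Y a" if "Z \<in> support" "Z - Y = {a, u}" for Z
        using less.hyps[of Z Y a] that Y a 3 by (simp add: card_2_iff)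
      ultimately show ?case using exchangeable_by_reduction[OF X u a 1(1) 1(3)] by blast
    qed
  qed
qed

lemma valuation_nu: "matroid_valuation E d nu"
  unfolding matroid_valuation_def
proof (intro conjI ballI)
  show "nu B \<noteq> -\<infinity>" for B by (simp add: nu_def)
  show "\<exists>B\<in>dsubsets E d. nu B < \<infinity>"
    using support_nonempty support_subset by (auto simp: nu_def)
  fix B B' i assume B: "B \<in> dsubsets E d" and B': "B' \<in> dsubsets E d" and i: "i \<in> B - B'"
  show "\<exists>j\<in>B' - B. nu (insert j (B - {i})) + nu (insert i B' - {j}) \<le> nu B + nu B'"
  proof (cases "B \<in> support \<and> B' \<in> support")
    case True
    then obtain j where "j \<in> B' - B" "insert j (B - {i}) \<in> support" "insert i B' - {j} \<in> support"
      "weight (insert j (B - {i})) + weight (insert i B' - {j}) \<le> weight B + weight B'"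
      using exchangeable_all i unfolding exchangeable_def by blast
    then show ?thesis using True by (intro bexI[of _ j]) (simp_all add: nu_def)
  next
    case False
    have "finite B" "finite B'" "card B = card B'"
      using B B' finite_subset[OF _ finite_ground] by (auto simp: dsubsets_def)
    then have "card (B' - B) = card (B - B')" using card_diff_sym by metis
    moreover have "card (B - B') > 0" using i \<open>finite B\<close> by (auto simp: card_gt_0_iff)
    ultimately obtain j where "j \<in> B' - B" by (metis card.empty ex_in_conv less_irrefl)
    moreover have "nu B + nu B' = \<infinity>" using False by (auto simp: nu_def)
    ultimately show ?thesis by auto
  qed
qed

end

section \<open>From a valuation to a flock\<close>

lemma integral_valuation_maximizers:
  assumes E: "finite E" and \<nu>: "matroid_valuation E d \<nu>"
    and int: "\<forall>B\<in>dsubsets E d. \<nu> B = \<infinity> \<or> (\<exists>z::int. \<nu> B = ereal (of_int z))"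
  obtains D w where "D \<subseteq> dsubsets E d"
    "\<And>\<alpha>. val_bases E d \<nu> (\<lambda>i. real_of_int (\<alpha> i)) = maximizers D (\<lambda>B. (\<Sum>x\<in>B. \<alpha> x) - w B)"
proof -
  define D where "D = {B\<in>dsubsets E d. \<nu> B \<noteq> \<infinity>}"
  define w where "w B = (SOME z::int. \<nu> B = ereal (of_int z))" for B
  have D: "D \<subseteq> dsubsets E d" by (simp add: D_def)
  have "\<nu> B = ereal (of_int (w B))" if "B \<in> D" for B
  proof -
    have "\<exists>z::int. \<nu> B = ereal (of_int z)" using int that by (auto simp: D_def)
    then show ?thesis unfolding w_def by (rule someI_ex)
  qed
  then have \<nu>_eq: "\<forall>B\<in>dsubsets E d. \<nu> B = (if B \<in> D then ereal (of_int (w B)) else \<infinity>)"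
    by (simp add: D_def)
  obtain B where "B \<in> dsubsets E d" "\<nu> B < \<infinity>" using \<nu> unfolding matroid_valuation_def by blast
  then have "D \<noteq> {}" by (auto simp: D_def)
  from that[OF D val_bases_eq_maximizers[OF E D this \<nu>_eq]] show thesis .
qed

lemma mcontract_eq_mdelete_maximizers:
  fixes f :: "'a set \<Rightarrow> int"
  assumes E: "finite E"
    and N: "matroid_of_rank E d (maximizers D f)"
    and N': "matroid_of_rank E d (maximizers D (\<lambda>B. f B + of_bool (i \<in> B)))"
  shows "mcontract (maximizers D f) i = mdelete (maximizers D (\<lambda>B. f B + of_bool (i \<in> B))) i"
proof (cases "\<exists>B\<in>maximizers D f. i \<in> B")
  case True
  then obtain B1 where "B1 \<in> maximizers D f" "i \<in> B1" by blast
  from maximizers_add_indicator_hit[of B1 D f "\<lambda>B. i \<in> B", OF this] True show ?thesis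
    using mcontract_eq_mdelete_iff[OF E N N'] by simp
next
  case False
  with maximizers_add_indicator_miss[OF matroid_of_rank_nonempty[OF N], of "\<lambda>B. i \<in> B"] show ?thesis
    using mcontract_eq_mdelete_iff[OF E N N'] by simp
qed

lemma matroid_flock_of_maximizers:
  fixes w :: "'a set \<Rightarrow> int"
  assumes E: "finite E" and D: "D \<subseteq> dsubsets E d"
    and mat: "\<And>\<alpha>. \<alpha> \<in> zvec E \<Longrightarrow> matroid_of_rank E d (M \<alpha>)"
    and rep: "\<And>\<alpha>. \<alpha> \<in> zvec E \<Longrightarrow> M \<alpha> = maximizers D (\<lambda>B. (\<Sum>x\<in>B. \<alpha> x) - w B)"
  shows "matroid_flock E d M"
proof -
  define f where "f \<alpha> = (\<lambda>B. (\<Sum>x\<in>B. \<alpha> x) - w B)" for \<alpha> :: "'a \<Rightarrow> int"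
  have D_basis: "B \<subseteq> E" "card B = d" "finite B" if "B \<in> D" for B
  proof -
    show "B \<subseteq> E" "card B = d" using that D by (auto simp: dsubsets_def)
    then show "finite B" using finite_subset[OF _ E] by blast
  qed
  have mf1: "mcontract (M \<alpha>) i = mdelete (M (incr \<alpha> i)) i" if \<alpha>: "\<alpha> \<in> zvec E" and i: "i \<in> E" for \<alpha> i
  proof -
    have "M (incr \<alpha> i) = maximizers D (\<lambda>B. (\<Sum>x\<in>B. incr \<alpha> i x) - w B)"
      by (rule rep[OF zvec_incr[OF \<alpha> i]])
    also have "\<dots> = maximizers D (\<lambda>B. f \<alpha> B + of_bool (i \<in> B))"
      by (rule maximizers_cong) (simp add: f_def sum_incr D_basis(3))
    finally have "M (incr \<alpha> i) = maximizers D (\<lambda>B. f \<alpha> B + of_bool (i \<in> B))" .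
    then show ?thesis
      using mcontract_eq_mdelete_maximizers[OF E, where D = D and f = "f \<alpha>" and i = i] mat[OF \<alpha>] mat[OF zvec_incr[OF \<alpha> i]] rep[OF \<alpha>]
      by (simp add: f_def)
  qed
  have mf2: "M \<alpha> = M (\<lambda>x. \<alpha> x + unitvec E x)" if \<alpha>: "\<alpha> \<in> zvec E" for \<alpha>
  proof -
    have shifted: "(\<lambda>x. \<alpha> x + unitvec E x) \<in> zvec E" using \<alpha> by (auto simp: zvec_def unitvec_def)
    have "(\<Sum>x\<in>B. \<alpha> x + unitvec E x) = (\<Sum>x\<in>B. \<alpha> x) + int d" if "B \<in> D" for B
      using D_basis[OF that] by (simp add: sum.distrib unitvec_def subset_iff)
    then have "M (\<lambda>x. \<alpha> x + unitvec E x) = maximizers D (\<lambda>B. f \<alpha> B + int d)"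
      unfolding rep[OF shifted] by (intro maximizers_cong) (simp add: f_def)
    then show ?thesis using rep[OF \<alpha>] by (simp add: maximizers_add_const f_def)
  qed
  show ?thesis
    unfolding matroid_flock_def add_unitvec_singleton using mat mf1 mf2 by blast
qed

theorem mainTheorem1:
  fixes E :: "'a set" and d :: nat and M :: "('a \<Rightarrow> int) \<Rightarrow> 'a set set"
  assumes "finite E"
    and "\<forall>\<alpha>\<in>zvec E. matroid_of_rank E d (M \<alpha>)"
  shows "matroid_flock E d M \<longleftrightarrow>
    (\<exists>\<nu> :: 'a set \<Rightarrow> ereal.
       matroid_valuation E d \<nu> \<and>
       (\<forall>B\<in>dsubsets E d. \<nu> B = \<infinity> \<or> (\<exists>z::int. \<nu> B = ereal (of_int z))) \<and>
       (\<forall>\<alpha>\<in>zvec E. M \<alpha> = val_bases E d \<nu> (\<lambda>i. real_of_int (\<alpha> i))))"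
proof (rule iffI, goal_cases)
  case 1
  interpret mf1_flock E d M
    using assms(1) 1 by unfold_locales (auto simp: matroid_flock_def add_unitvec_singleton)
  show ?case
    using valuation_nu bases_eq_val_bases by (intro exI[of _ nu]) (auto simp: nu_def)
next
  case 2
  then obtain \<nu> where \<nu>: "matroid_valuation E d \<nu>"
      "\<forall>B\<in>dsubsets E d. \<nu> B = \<infinity> \<or> (\<exists>z::int. \<nu> B = ereal (of_int z))"
      "\<forall>\<alpha>\<in>zvec E. M \<alpha> = val_bases E d \<nu> (\<lambda>i. real_of_int (\<alpha> i))"
    by blast
  obtain D w where D: "D \<subseteq> dsubsets E d"
      and rep: "\<And>\<alpha>. val_bases E d \<nu> (\<lambda>i. real_of_int (\<alpha> i)) = maximizers D (\<lambda>B. (\<Sum>x\<in>B. \<alpha> x) - w B)"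
    using integral_valuation_maximizers[OF assms(1) \<nu>(1,2)] by blast
  show ?case
    by (rule matroid_flock_of_maximizers[OF assms(1) D]) (use assms(2) \<nu>(3) rep in auto)
qed

end
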